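(* Let $A \in \mathbb{C}^{m\times n}$, let $k$ be an integer with $1\le k\le\min\{m,n\}$, and let $\rho\in(0,1)$. Let $\Pi$ be the $n\times n$ column permutation matrix output by the CCEQR algorithm (described in the context) on input $(A,k,\rho)$. Then there exists a unitary $Q\in\mathbb{C}^{m\times m}$ such that $Q^*A\Pi$ has $\mathrm{GB}(k)$ form.
   Context: $\mathrm{GB}(k)$ form: a matrix $R\in\mathbb{C}^{m\times n}$ has $\mathrm{GB}(k)$ form ($0\le k\le\min\{m,n\}$) if its first $k$ columns are upper-triangular and $|R(i,i)| = \max_{i\le j\le n}\|R(i:m,j)\|_2$ for $1\le i\le k$. Householder reflection at step $i$ on $\mathbb{C}^p$: a unitary $I-\tau vv^*$, $\tau\ge0$ real, $v(1..i-1)=0$, $v(i)=1$, mapping a given $x$ to $[x(1),\dots,x(i-1),\mu',0,\dots,0]$ with $|\mu'|=\|x(i:p)\|_2$. Golub–Businger algorithm on $B\in\mathbb{C}^{p\times b}$ for $d\le\min\{p,b\}$ steps: $R\leftarrow B$; for $i=1..d$ choose $j_{\max}\in\arg\max_{j\ge i}\|R(i:p,j)\|_2$, swap columns $i,j_{\max}$ (recorded in a permutation $\widehat P$), let $H_i$ be the step-$i$ Householder reflection zeroing entries $(i+1):p$ of column $i$, set $R\leftarrow H_iR$; output $\widehat R = H_d\cdots H_1B\widehat P$. CCEQR algorithm on $(A,k,\rho)$. It maintains a permutation $\Pi$, a unitary $Q$, integers $s$ ("committed" count) and $t$ ("tracked" count) with $s+t\le n$, and a number $\mu$. Column positions $1..s$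 are committed, $s+1..s+t$ tracked, $s+t+1..n$ untracked. Define $\gamma(j)=\|(Q^*A\Pi)((s+1):m,\,j)\|_2^2$ for $s<j\le s+t$ (the squared norm of the component of $A\Pi(:,j)$ orthogonal to the range of $A\Pi(:,1:s)$) and $\gamma(j)=\|A\Pi(:,j)\|_2^2$ for $j>s+t$. Initialize $Q=I_m$, $\Pi=I_n$, $s=0$, $t=n$, $\mu=0$. While $s<k$, perform a cycle: (Collect) Let $b=1+\lfloor\rho(t-1)\rfloor$. Let the candidates be $b$ indices of $\{s+1,\dots,s+t\}$ with the largest values of $\gamma$, and let $\delta$ be the largest $\gamma(j)$ over the non-candidate indices of $\{s+1,\dots,s+t\}$ ($\delta=0$ if $b=t$). In the first cycle only, then set $t\leftarrow b$ (non-candidates become untracked). Apply $d=\min\{m-s,b\}$ steps of the Golub–Businger algorithm to $B=(Q^*A\Pi)((s+1):m,\ \text{candidates})$, obtaining $\widehat P$, $H_1,\dots,H_d$, $\widehat R$. Update $\Pi$ by moving the candidate columns to positions $s+1,\dots,s+b$ in the order given by $\widehat P$, placing the other tracked columns in positions $s+b+1,\dots,s+t$ and leaving all other positions unchanged. (Commit) Let $c=\max\{i\in\{1,\dots,d\}: |\widehat R(i,i)|^2\ge\max(\delta,\mu)\}$. Set $Q\leftarrow Q\,\mathrm{diag}(I_s,\,H_1H_2\cdots H_c)$, $s\leftarrow s+c$, $t\leftarrow t-c$. If $s\ge k$, stop and output $\Pi$. (Expand) Let $M=\max_{s<j\le s+t}\gamma(j)$ (with $M=0$ if $t=0$). Let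 $U$ be the set of untracked positions $j>s+t$ with $\|A\Pi(:,j)\|_2^2\ge M$; if $U$ is empty and untracked positions exist, instead let $U$ be the untracked positions with $\|A\Pi(:,j)\|_2^2\ge 0.9$ times the largest squared norm among untracked columns. Permute these columns to positions $s+t+1,\dots,s+t+|U|$ (leaving committed and tracked positions unchanged), set $t\leftarrow t+|U|$, and set $\mu$ to the largest $\|A\Pi(:,j)\|_2^2$ over the remaining untracked positions ($\mu=0$ if none). *)

theory Defs
  imports Complex_Main "Jordan_Normal_Form.Matrix"
begin

(* All indices are 0-based: row/column position r of the paper is r-1 here. *)

definition mat_adj :: "complex mat \<Rightarrow> complex mat" where
  "mat_adj M = mat (dim_col M) (dim_row M) (\<lambda>(i,j). cnj (M $$ (j,i)))"

definition unitary_mat :: "complex mat \<Rightarrow> bool" where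
  "unitary_mat U \<longleftrightarrow> dim_row U = dim_col U \<and> mat_adj U * U = 1\<^sub>m (dim_row U)"

definition colnorm2 :: "complex mat \<Rightarrow> nat \<Rightarrow> nat \<Rightarrow> real" where
  "colnorm2 M r j = (\<Sum>i\<in>{r..<dim_row M}. (cmod (M $$ (i,j)))\<^sup>2)"

definition GB_form :: "nat \<Rightarrow> complex mat \<Rightarrow> bool" where
  "GB_form k R \<longleftrightarrow> k \<le> min (dim_row R) (dim_col R)
     \<and> (\<forall>j<k. \<forall>i. j < i \<and> i < dim_row R \<longrightarrow> R $$ (i,j) = 0)
     \<and> (\<forall>i<k. cmod (R $$ (i,i)) = Max ((\<lambda>j. sqrt (colnorm2 R i j)) ` {i..<dim_col R}))"

text \<open>permutation matrix of a permutation p: column j of A * perm_mat n p is column p j of A\<close>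
definition perm_mat :: "nat \<Rightarrow> (nat \<Rightarrow> nat) \<Rightarrow> complex mat" where
  "perm_mat n p = mat n n (\<lambda>(i,j). if i = p j then 1 else 0)"

definition swp :: "nat \<Rightarrow> nat \<Rightarrow> nat \<Rightarrow> nat" where
  "swp a b l = (if l = a then b else if l = b then a else l)"

definition swap_cols :: "complex mat \<Rightarrow> nat \<Rightarrow> nat \<Rightarrow> complex mat" where
  "swap_cols M a b = mat (dim_row M) (dim_col M) (\<lambda>(r,l). M $$ (r, swp a b l))"

definition householder :: "nat \<Rightarrow> nat \<Rightarrow> complex vec \<Rightarrow> complex mat \<Rightarrow> bool" where
  "householder q i x H \<longleftrightarrow> i < q \<and> (\<exists>(\<tau>::real) v. \<tau> \<ge> 0 \<and> v \<in> carrier_vec q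
     \<and> (\<forall>l<i. v $ l = 0) \<and> v $ i = 1
     \<and> H = 1\<^sub>m q - complex_of_real \<tau> \<cdot>\<^sub>m mat q q (\<lambda>(a,b). v $ a * cnj (v $ b))
     \<and> unitary_mat H
     \<and> (\<forall>l<i. (H *\<^sub>v x) $ l = x $ l)
     \<and> cmod ((H *\<^sub>v x) $ i) = sqrt (\<Sum>l\<in>{i..<q}. (cmod (x $ l))\<^sup>2)
     \<and> (\<forall>l\<in>{Suc i..<q}. (H *\<^sub>v x) $ l = 0))"

text \<open>gb_steps B i \<sigma> Hs R: after i steps of Golub--Businger on B, the accumulated column
  permutation is \<sigma> (column l of R comes from column \<sigma> l of B), Hs = [H_1,...,H_i],
  and R = H_i ... H_1 B P.\<close>
inductive gb_steps :: "complex mat \<Rightarrow> nat \<Rightarrow> (nat \<Rightarrow> nat) \<Rightarrow> complex mat list \<Rightarrow> complex mat \<Rightarrow> bool"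
  for B :: "complex mat" where
  gb_init: "gb_steps B 0 id [] B"
| gb_step: "gb_steps B i \<sigma> Hs R \<Longrightarrow> i < min (dim_row B) (dim_col B)
    \<Longrightarrow> jm \<in> {i..<dim_col B} \<Longrightarrow> (\<forall>j\<in>{i..<dim_col B}. colnorm2 R i j \<le> colnorm2 R i jm)
    \<Longrightarrow> householder (dim_row B) i (col (swap_cols R i jm) i) H
    \<Longrightarrow> gb_steps B (Suc i) (\<sigma> \<circ> swp i jm) (Hs @ [H]) (H * swap_cols R i jm)"

definition cc_gamma :: "complex mat \<Rightarrow> (nat \<Rightarrow> nat) \<Rightarrow> complex mat \<Rightarrow> nat \<Rightarrow> nat \<Rightarrow> nat \<Rightarrow> real" where
  "cc_gamma A p Q s t j = (if j < s + t
      then colnorm2 (mat_adj Q * A * perm_mat (dim_col A) p) s j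
      else colnorm2 A 0 (p j))"

definition cand_enum :: "nat set \<Rightarrow> nat \<Rightarrow> nat" where
  "cand_enum C l = sorted_list_of_set C ! l"

definition cand_mat :: "complex mat \<Rightarrow> (nat \<Rightarrow> nat) \<Rightarrow> complex mat \<Rightarrow> nat \<Rightarrow> nat set \<Rightarrow> complex mat" where
  "cand_mat A p Q s C = (let W = mat_adj Q * A * perm_mat (dim_col A) p in
     mat (dim_row A - s) (card C) (\<lambda>(i,l). W $$ (s + i, cand_enum C l)))"

type_synonym cc_state = "(nat \<Rightarrow> nat) \<times> complex mat \<times> nat \<times> nat \<times> real \<times> bool"
  (* permutation \<Pi> (as a function on positions), Q, s, t, \<mu>, "this is the first cycle" *)

definition cceqr_cycle :: "complex mat \<Rightarrow> nat \<Rightarrow> real \<Rightarrow> cc_state \<Rightarrow> cc_state \<Rightarrow> bool" where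
  "cceqr_cycle A k \<rho> st st' \<longleftrightarrow> (case st of (p, Q, s, t, \<mu>, fc) \<Rightarrow>
    (let m = dim_row A; n = dim_col A; T = {s..<s+t};
         b = nat (1 + \<lfloor>\<rho> * (real t - 1)\<rfloor>); g = cc_gamma A p Q s t
     in \<exists>C \<delta> t1 \<sigma> Hs R p1 c Q1 s1 t2.
        \<comment> \<open>Collect\<close>
        C \<subseteq> T \<and> card C = b \<and> (\<forall>x\<in>C. \<forall>j\<in>T - C. g j \<le> g x)
      \<and> \<delta> = (if T - C = {} then 0 else Max (g ` (T - C)))
      \<and> t1 = (if fc then b else t)
      \<and> gb_steps (cand_mat A p Q s C) (min (m - s) b) \<sigma> Hs R
      \<and> (\<forall>l<b. p1 (s + l) = p (cand_enum C (\<sigma> l)))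
      \<and> bij_betw p1 {s+b..<s+t} (p ` (T - C))
      \<and> (\<forall>l. l < s \<or> s + t \<le> l \<longrightarrow> p1 l = p l)
        \<comment> \<open>Commit\<close>
      \<and> {i\<in>{1..min (m - s) b}. max \<delta> \<mu> \<le> (cmod (R $$ (i-1, i-1)))\<^sup>2} \<noteq> {}
      \<and> c = Max {i\<in>{1..min (m - s) b}. max \<delta> \<mu> \<le> (cmod (R $$ (i-1, i-1)))\<^sup>2}
      \<and> Q1 = Q * four_block_mat (1\<^sub>m s) (0\<^sub>m s (m - s)) (0\<^sub>m (m - s) s)
                 (foldr (*) (take c Hs) (1\<^sub>m (m - s)))
      \<and> s1 = s + c \<and> t2 = t1 - c
      \<and> (if k \<le> s1 then st' = (p1, Q1, s1, t2, \<mu>, False)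
         else
        \<comment> \<open>Expand\<close>
         (let M = (if t2 = 0 then 0 else Max (cc_gamma A p1 Q1 s1 t2 ` {s1..<s1+t2}));
              Utr = {s1+t2..<n}; nrm = (\<lambda>j. colnorm2 A 0 (p1 j));
              U0 = {j\<in>Utr. M \<le> nrm j};
              U = (if U0 = {} \<and> Utr \<noteq> {} then {j\<in>Utr. 0.9 * Max (nrm ` Utr) \<le> nrm j} else U0)
          in \<exists>p'. (\<forall>l. l < s1 + t2 \<or> n \<le> l \<longrightarrow> p' l = p1 l)
               \<and> bij_betw p' {s1+t2..<s1+t2+card U} (p1 ` U)
               \<and> bij_betw p' {s1+t2+card U..<n} (p1 ` (Utr - U))
               \<and> st' = (p', Q1, s1, t2 + card U,
                        (if Utr - U = {} then 0 else Max (nrm ` (Utr - U))), False)))))"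

inductive cceqr_reach :: "complex mat \<Rightarrow> nat \<Rightarrow> real \<Rightarrow> cc_state \<Rightarrow> bool"
  for A :: "complex mat" and k :: nat and \<rho> :: real where
  cc_init: "cceqr_reach A k \<rho> (id, 1\<^sub>m (dim_row A), 0, dim_col A, 0, True)"
| cc_step: "cceqr_reach A k \<rho> (p, Q, s, t, \<mu>, fc) \<Longrightarrow> s < k
    \<Longrightarrow> cceqr_cycle A k \<rho> (p, Q, s, t, \<mu>, fc) st' \<Longrightarrow> cceqr_reach A k \<rho> st'"

text \<open>P is a permutation matrix that CCEQR (with some admissible tie-breaking) outputs on (A,k,\<rho>)\<close>
definition cceqr_output :: "complex mat \<Rightarrow> nat \<Rightarrow> real \<Rightarrow> complex mat \<Rightarrow> bool" where
  "cceqr_output A k \<rho> P \<longleftrightarrow> (\<exists>p Q s t \<mu> fc. cceqr_reach A k \<rho> (p, Q, s, t, \<mu>, fc)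
      \<and> k \<le> s \<and> P = perm_mat (dim_col A) p)"

end

(*
  Every reachable state (\<Pi>, Q, s, t, \<mu>) of CCEQR satisfies an invariant: Q is unitary and the
  first s columns of W = Q\<^sup>* A \<Pi> are Golub--Businger pivoted, i.e. for j < s the squared
  diagonal entry |W(j,j)|\<^sup>2 dominates the residual norm of W(j:m, l) for every l \<ge> j. With
  l = j this already makes those columns upper triangular, so at termination (s \<ge> k) the
  invariant is the GB(k) form.

  Reordering columns at positions \<ge> s preserves the invariant, and so does multiplying Q by a
  unitary matrix that fixes the first s coordinates. In a commit, the c new pivots are the
  diagonal of the Golub--Businger factor R of the candidate block: candidate columns are
  controlled by the pivoting of that factorization, since the uncommitted reflections fix the
  first c coordinates and preserve the norm of the rest; all other columns have residual norm
  at most max(\<delta>, \<mu>), which the commit rule bounds by the last and smallest new pivot.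
*)
theory Submission
  imports Defs "Jordan_Normal_Form.Determinant"
begin

lemma mat_adj_dim [simp]:
  "dim_row (mat_adj M) = dim_col M" "dim_col (mat_adj M) = dim_row M"
  by (simp_all add: mat_adj_def)

lemma index_mat_adj [simp]:
  "i < dim_col M \<Longrightarrow> j < dim_row M \<Longrightarrow> mat_adj M $$ (i, j) = cnj (M $$ (j, i))"
  by (simp add: mat_adj_def)

lemma mat_adj_carrier [simp]: "M \<in> carrier_mat a b \<Longrightarrow> mat_adj M \<in> carrier_mat b a"
  by (intro carrier_matI) auto

lemma mat_adj_adj [simp]: "mat_adj (mat_adj M) = M"
  by (rule eq_matI) auto

lemma mat_adj_one [simp]: "mat_adj (1\<^sub>m n) = 1\<^sub>m n"
  by (rule eq_matI) auto

lemma mat_adj_mult: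
  assumes "A \<in> carrier_mat a b" "B \<in> carrier_mat b c"
  shows "mat_adj (A * B) = mat_adj B * mat_adj A"
proof (rule eq_matI)
  fix i j assume "i < dim_row (mat_adj B * mat_adj A)" "j < dim_col (mat_adj B * mat_adj A)"
  hence i: "i < c" and j: "j < a" using assms by auto
  have "mat_adj (A * B) $$ (i, j) = cnj (\<Sum>k<b. A $$ (j, k) * B $$ (k, i))"
    using assms i j by (auto simp: scalar_prod_def atLeast0LessThan)
  also have "\<dots> = (\<Sum>k<b. cnj (B $$ (k, i)) * cnj (A $$ (j, k)))"
    by (simp add: mult.commute)
  also have "\<dots> = (mat_adj B * mat_adj A) $$ (i, j)"
    using assms i j by (auto simp: scalar_prod_def atLeast0LessThan)
  finally show "mat_adj (A * B) $$ (i, j) = (mat_adj B * mat_adj A) $$ (i, j)" .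
qed (use assms in auto)

lemma unitary_matI: "U \<in> carrier_mat n n \<Longrightarrow> mat_adj U * U = 1\<^sub>m n \<Longrightarrow> unitary_mat U"
  by (simp add: unitary_mat_def)

lemma unitary_matD: "unitary_mat U \<Longrightarrow> U \<in> carrier_mat n n \<Longrightarrow> mat_adj U * U = 1\<^sub>m n"
  by (simp add: unitary_mat_def)

lemma unitary_one [simp]: "unitary_mat (1\<^sub>m n)"
  by (simp add: unitary_mat_def)

lemma unitary_mat_mult:
  assumes A: "A \<in> carrier_mat n n" "unitary_mat A" and B: "B \<in> carrier_mat n n" "unitary_mat B"
  shows "unitary_mat (A * B)"
proof (rule unitary_matI)
  have "mat_adj (A * B) * (A * B) = mat_adj B * (mat_adj A * (A * B))"
    using A B by (simp add: mat_adj_mult assoc_mult_mat[of _ n n _ n _ n])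
  also have "mat_adj A * (A * B) = B"
    using A B by (simp add: assoc_mult_mat[symmetric, of _ n n _ n _ n] unitary_matD)
  finally show "mat_adj (A * B) * (A * B) = 1\<^sub>m n"
    using B by (simp add: unitary_matD)
qed (use A B in auto)

lemma unitary_mat_adj:
  assumes "U \<in> carrier_mat n n" "unitary_mat U"
  shows "unitary_mat (mat_adj U)"
  using assms mat_mult_left_right_inverse[of "mat_adj U" n U]
  by (intro unitary_matI) (auto simp: unitary_matD)

definition tail_norm2 :: "complex vec \<Rightarrow> nat \<Rightarrow> real" where
  "tail_norm2 v r = (\<Sum>a\<in>{r..<dim_vec v}. (cmod (v $ a))\<^sup>2)"

lemma tail_norm2_nonneg: "0 \<le> tail_norm2 v r"
  unfolding tail_norm2_def by (auto intro: sum_nonneg)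

lemma colnorm2_eq_tail_norm2: "j < dim_col M \<Longrightarrow> colnorm2 M r j = tail_norm2 (col M j) r"
  unfolding colnorm2_def tail_norm2_def by simp

lemma tail_norm2_split:
  "r \<le> c \<Longrightarrow> c \<le> dim_vec v \<Longrightarrow> tail_norm2 v r = (\<Sum>a\<in>{r..<c}. (cmod (v $ a))\<^sup>2) + tail_norm2 v c"
  unfolding tail_norm2_def by (simp add: sum.atLeastLessThan_concat)

lemma tail_norm2_Suc: "r < dim_vec v \<Longrightarrow> tail_norm2 v r = (cmod (v $ r))\<^sup>2 + tail_norm2 v (Suc r)"
  using tail_norm2_split[of r "Suc r" v] by simp

lemma tail_norm2_antimono: "r \<le> c \<Longrightarrow> tail_norm2 v c \<le> tail_norm2 v r"
  unfolding tail_norm2_def by (rule sum_mono2) auto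

lemma entry_le_tail_norm2: "r < dim_vec v \<Longrightarrow> (cmod (v $ r))\<^sup>2 \<le> tail_norm2 v r"
  using tail_norm2_Suc[of r v] tail_norm2_nonneg[of v "Suc r"] by simp

lemma tail_norm2_eq_0_iff: "tail_norm2 v r = 0 \<longleftrightarrow> (\<forall>a. r \<le> a \<longrightarrow> a < dim_vec v \<longrightarrow> v $ a = 0)"
  unfolding tail_norm2_def by (subst sum_nonneg_eq_0_iff) auto

lemma tail_norm2_vec_last:
  assumes "v \<in> carrier_vec (s + q)"
  shows "tail_norm2 v (s + i) = tail_norm2 (vec_last v q) i"
proof -
  have "tail_norm2 v (s + i) = (\<Sum>a\<in>{i..<q}. (cmod (v $ (s + a)))\<^sup>2)"
    using assms sum.shift_bounds_nat_ivl[of "\<lambda>a. (cmod (v $ a))\<^sup>2" i s q]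
    by (simp add: tail_norm2_def add.commute)
  also have "\<dots> = tail_norm2 (vec_last v q) i"
    using assms by (simp add: tail_norm2_def vec_last_def)
  finally show ?thesis .
qed

text \<open>For a column matrix \<open>X\<close>, the entry \<open>(X\<^sup>* X)(0,0)\<close> is the squared norm of \<open>X\<close>, and
  \<open>(U X)\<^sup>* (U X) = X\<^sup>* X\<close>.\<close>
lemma tail_norm2_unitary_mult:
  assumes U: "U \<in> carrier_mat n n" "unitary_mat U" and x: "x \<in> carrier_vec n"
  shows "tail_norm2 (U *\<^sub>v x) 0 = tail_norm2 x 0"
proof -
  define X where "X = mat n 1 (\<lambda>(i, _). x $ i)"
  have X: "X \<in> carrier_mat n 1" by (simp add: X_def)
  have gram: "(mat_adj Y * Y) $$ (0, 0) = complex_of_real (tail_norm2 (col Y 0) 0)"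
    if "Y \<in> carrier_mat n 1" for Y
  proof -
    have "(mat_adj Y * Y) $$ (0, 0) = (\<Sum>i<n. cnj (Y $$ (i, 0)) * Y $$ (i, 0))"
      using that by (auto simp: scalar_prod_def atLeast0LessThan)
    also have "\<dots> = (\<Sum>i<n. complex_of_real ((cmod (Y $$ (i, 0)))\<^sup>2))"
      by (intro sum.cong refl) (metis complex_norm_square mult.commute of_real_power)
    finally show ?thesis
      using that by (simp add: tail_norm2_def atLeast0LessThan)
  qed
  have "mat_adj (U * X) * (U * X) = mat_adj X * (mat_adj U * (U * X))"
    using U X by (simp add: mat_adj_mult assoc_mult_mat[of _ 1 n _ n _ 1])
  also have "mat_adj U * (U * X) = X"
    using U X by (simp add: assoc_mult_mat[symmetric, of _ n n _ n _ 1] unitary_matD)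
  finally have "mat_adj (U * X) * (U * X) = mat_adj X * X" .
  moreover have "col X 0 = x"
    using x by (auto simp: X_def)
  moreover have "col (U * X) 0 = U *\<^sub>v col X 0"
    using col_mult2[OF U(1) X, of 0] by simp
  ultimately show ?thesis
    using gram[OF X] gram[of "U * X"] U X by simp
qed

definition tail_isometry :: "nat \<Rightarrow> nat \<Rightarrow> complex mat \<Rightarrow> bool" where
  "tail_isometry q c M \<longleftrightarrow> M \<in> carrier_mat q q \<and> (\<forall>x \<in> carrier_vec q.
     (\<forall>r<c. (M *\<^sub>v x) $ r = x $ r) \<and> tail_norm2 (M *\<^sub>v x) c = tail_norm2 x c)"

lemma tail_isometry_carrier: "tail_isometry q c M \<Longrightarrow> M \<in> carrier_mat q q"
  by (simp add: tail_isometry_def)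

lemma tail_isometry_head:
  "tail_isometry q c M \<Longrightarrow> x \<in> carrier_vec q \<Longrightarrow> r < c \<Longrightarrow> (M *\<^sub>v x) $ r = x $ r"
  by (simp add: tail_isometry_def)

lemma tail_isometry_tail:
  "tail_isometry q c M \<Longrightarrow> x \<in> carrier_vec q \<Longrightarrow> tail_norm2 (M *\<^sub>v x) c = tail_norm2 x c"
  by (simp add: tail_isometry_def)

lemma tail_isometry_one: "tail_isometry q c (1\<^sub>m q)"
  by (simp add: tail_isometry_def)

lemma tail_isometry_mult:
  assumes A: "tail_isometry q c A" and B: "tail_isometry q c B"
  shows "tail_isometry q c (A * B)"
  unfolding tail_isometry_def
proof (intro conjI ballI allI impI)
  have A_carrier: "A \<in> carrier_mat q q" and B_carrier: "B \<in> carrier_mat q q"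
    using A B by (simp_all add: tail_isometry_carrier)
  then show "A * B \<in> carrier_mat q q" by simp
  fix x :: "complex vec" assume x: "x \<in> carrier_vec q"
  have Bx: "B *\<^sub>v x \<in> carrier_vec q" and assoc: "(A * B) *\<^sub>v x = A *\<^sub>v (B *\<^sub>v x)"
    using A_carrier B_carrier x by simp_all
  show "((A * B) *\<^sub>v x) $ r = x $ r" if "r < c" for r
    unfolding assoc by (simp only: tail_isometry_head[OF A Bx that] tail_isometry_head[OF B x that])
  show "tail_norm2 ((A * B) *\<^sub>v x) c = tail_norm2 x c"
    unfolding assoc by (simp only: tail_isometry_tail[OF A Bx] tail_isometry_tail[OF B x])
qed

lemma tail_isometry_antimono:
  assumes "c' \<le> c" and M: "tail_isometry q c M"
  shows "tail_isometry q c' M"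
  unfolding tail_isometry_def
proof (intro conjI ballI allI impI)
  show M_carrier: "M \<in> carrier_mat q q" using M by (rule tail_isometry_carrier)
  fix x :: "complex vec" assume x: "x \<in> carrier_vec q"
  note head = tail_isometry_head[OF M x]
  show "(M *\<^sub>v x) $ r = x $ r" if "r < c'" for r
    using head that assms(1) by simp
  show "tail_norm2 (M *\<^sub>v x) c' = tail_norm2 x c'"
  proof (cases "c \<le> q")
    case True
    have "(\<Sum>a\<in>{c'..<c}. (cmod ((M *\<^sub>v x) $ a))\<^sup>2) = (\<Sum>a\<in>{c'..<c}. (cmod (x $ a))\<^sup>2)"
      using head by (intro sum.cong) auto
    moreover have "tail_norm2 (M *\<^sub>v x) c' = (\<Sum>a\<in>{c'..<c}. (cmod ((M *\<^sub>v x) $ a))\<^sup>2) + tail_norm2 (M *\<^sub>v x) c"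
      using M_carrier x True assms(1) by (intro tail_norm2_split) auto
    moreover have "tail_norm2 x c' = (\<Sum>a\<in>{c'..<c}. (cmod (x $ a))\<^sup>2) + tail_norm2 x c"
      using x True assms(1) by (intro tail_norm2_split) auto
    ultimately show ?thesis
      using tail_isometry_tail[OF M x] by linarith
  next
    case False
    have "M *\<^sub>v x = x"
    proof (rule eq_vecI)
      fix r assume "r < dim_vec x"
      then show "(M *\<^sub>v x) $ r = x $ r" using False x by (intro head) auto
    qed (use M_carrier x in simp)
    then show ?thesis by simp
  qed
qed

lemma tail_isometry_fixes_vanishing_tail:
  assumes M: "tail_isometry q c M" and x: "x \<in> carrier_vec q" and x_tail: "tail_norm2 x c = 0"
  shows "M *\<^sub>v x = x"
proof (rule eq_vecI)
  have M_carrier: "M \<in> carrier_mat q q" using M by (rule tail_isometry_carrier)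
  then show "dim_vec (M *\<^sub>v x) = dim_vec x" using x by simp
  fix r assume r: "r < dim_vec x"
  show "(M *\<^sub>v x) $ r = x $ r"
  proof (cases "r < c")
    case True
    then show ?thesis by (rule tail_isometry_head[OF M x])
  next
    case False
    have "tail_norm2 (M *\<^sub>v x) c = 0"
      using tail_isometry_tail[OF M x] x_tail by simp
    then have "(M *\<^sub>v x) $ r = 0"
      using False r M_carrier x unfolding tail_norm2_eq_0_iff by simp
    moreover have "x $ r = 0"
      using False r x_tail unfolding tail_norm2_eq_0_iff by simp
    ultimately show ?thesis by simp
  qed
qed

lemma tail_isometryI:
  assumes M: "M \<in> carrier_mat q q" "unitary_mat M" and "c \<le> q"
    and head: "\<And>x r. x \<in> carrier_vec q \<Longrightarrow> r < c \<Longrightarrow> (M *\<^sub>v x) $ r = x $ r"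
  shows "tail_isometry q c M"
  unfolding tail_isometry_def
proof (intro conjI ballI allI impI)
  show "M \<in> carrier_mat q q" by (rule M(1))
  fix x :: "complex vec" assume x: "x \<in> carrier_vec q"
  show "(M *\<^sub>v x) $ r = x $ r" if "r < c" for r using x that by (rule head)
  have "(\<Sum>a\<in>{0..<c}. (cmod ((M *\<^sub>v x) $ a))\<^sup>2) = (\<Sum>a\<in>{0..<c}. (cmod (x $ a))\<^sup>2)"
    using head[OF x] by (intro sum.cong) auto
  moreover have "tail_norm2 (M *\<^sub>v x) 0 = (\<Sum>a\<in>{0..<c}. (cmod ((M *\<^sub>v x) $ a))\<^sup>2) + tail_norm2 (M *\<^sub>v x) c"
    using M x \<open>c \<le> q\<close> by (intro tail_norm2_split) auto
  moreover have "tail_norm2 x 0 = (\<Sum>a\<in>{0..<c}. (cmod (x $ a))\<^sup>2) + tail_norm2 x c"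
    using x \<open>c \<le> q\<close> by (intro tail_norm2_split) auto
  ultimately show "tail_norm2 (M *\<^sub>v x) c = tail_norm2 x c"
    using tail_norm2_unitary_mult[OF M x] by linarith
qed

lemma householder_reflector:
  assumes "householder q i x H"
  obtains \<tau> v where "i < q" "v \<in> carrier_vec q" "\<forall>l<i. v $ l = 0" "unitary_mat H"
    "H = 1\<^sub>m q - complex_of_real \<tau> \<cdot>\<^sub>m mat q q (\<lambda>(a, b). v $ a * cnj (v $ b))"
  using assms unfolding householder_def by (elim conjE exE) (rule that, assumption+)

lemma householder_carrier: "householder q i x H \<Longrightarrow> H \<in> carrier_mat q q"
  by (erule householder_reflector) (simp add: carrier_matI)

lemma householder_unitary: "householder q i x H \<Longrightarrow> unitary_mat H"
  by (erule householder_reflector)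

lemma householder_index:
  assumes "householder q i x H"
  shows "\<exists>(\<tau>::real) (v::complex vec). i < q \<and> (\<forall>l<i. v $ l = 0) \<and> (\<forall>a b. a < q \<longrightarrow> b < q \<longrightarrow>
    H $$ (a, b) = (if a = b then 1 else 0) - complex_of_real \<tau> * (v $ a * cnj (v $ b)))"
proof -
  obtain \<tau> v where "i < q" "v \<in> carrier_vec q" "\<forall>l<i. v $ l = 0" "unitary_mat H"
    "H = 1\<^sub>m q - complex_of_real \<tau> \<cdot>\<^sub>m mat q q (\<lambda>(a, b). v $ a * cnj (v $ b))"
    using assms by (rule householder_reflector)
  moreover from this(5) have "\<forall>a b. a < q \<longrightarrow> b < q \<longrightarrow>
    H $$ (a, b) = (if a = b then 1 else 0) - complex_of_real \<tau> * (v $ a * cnj (v $ b))"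
    by simp
  ultimately show ?thesis by blast
qed

lemma householder_hermitian:
  assumes "householder q i x H"
  shows "mat_adj H = H"
proof -
  obtain \<tau> v where H: "\<And>a b. a < q \<Longrightarrow> b < q \<Longrightarrow>
      H $$ (a, b) = (if a = b then 1 else 0) - complex_of_real \<tau> * (v $ a * cnj (v $ b))"
    using householder_index[OF assms] by blast
  have H_carrier: "H \<in> carrier_mat q q" by (rule householder_carrier[OF assms])
  show ?thesis
  proof (rule eq_matI)
    fix a b assume "a < dim_row H" "b < dim_col H"
    then show "mat_adj H $$ (a, b) = H $$ (a, b)"
      using H_carrier by (simp add: H mult.commute)
  qed (simp_all add: carrier_matD[OF H_carrier])
qed

lemma householder_tail_isometry:
  assumes "householder q i x H"
  shows "tail_isometry q i H"
proof -
  obtain \<tau> v where "i < q" and v: "\<forall>l<i. v $ l = 0" and H: "\<And>a b. a < q \<Longrightarrow> b < q \<Longrightarrow>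
      H $$ (a, b) = (if a = b then 1 else 0) - complex_of_real \<tau> * (v $ a * cnj (v $ b))"
    using householder_index[OF assms] by blast
  have H_carrier: "H \<in> carrier_mat q q" by (rule householder_carrier[OF assms])
  have head: "(H *\<^sub>v y) $ r = y $ r" if y: "y \<in> carrier_vec q" and r: "r < i" for y r
  proof -
    have "row H r = unit_vec q r"
      using r v \<open>i < q\<close> H_carrier by (intro eq_vecI) (simp_all add: H unit_vec_def)
    then show ?thesis
      using H_carrier y r \<open>i < q\<close> by (simp add: scalar_prod_left_unit)
  qed
  show ?thesis
    by (rule tail_isometryI[OF H_carrier householder_unitary[OF assms] _ head]) (use \<open>i < q\<close> in simp_all)
qed

lemma householder_diag:
  assumes "householder q i x H" "x \<in> carrier_vec q"
  shows "(cmod ((H *\<^sub>v x) $ i))\<^sup>2 = tail_norm2 x i"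
proof -
  have "cmod ((H *\<^sub>v x) $ i) = sqrt (\<Sum>l\<in>{i..<q}. (cmod (x $ l))\<^sup>2)"
    using assms(1) unfolding householder_def by blast
  then show ?thesis
    using assms(2) tail_norm2_nonneg[of x i] by (simp add: tail_norm2_def)
qed

lemma foldr_mult_carrier:
  fixes L :: "'a :: semiring_1 mat list"
  shows "set L \<subseteq> carrier_mat q q \<Longrightarrow> foldr (*) L (1\<^sub>m q) \<in> carrier_mat q q"
  by (induction L) auto

lemma foldr_mult_eq_mult:
  fixes L :: "'a :: semiring_1 mat list"
  assumes "set L \<subseteq> carrier_mat q q" "Y \<in> carrier_mat q r"
  shows "foldr (*) L Y = foldr (*) L (1\<^sub>m q) * Y"
  using assms
proof (induction L)
  case (Cons H L)
  then show ?case
    using foldr_mult_carrier[of L q] by (simp add: assoc_mult_mat[of H q q _ q _ r])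
qed simp

lemma foldr_mult_append:
  fixes L L' :: "'a :: semiring_1 mat list"
  assumes "set L \<subseteq> carrier_mat q q" "set L' \<subseteq> carrier_mat q q"
  shows "foldr (*) (L @ L') (1\<^sub>m q) = foldr (*) L (1\<^sub>m q) * foldr (*) L' (1\<^sub>m q)"
  using foldr_mult_eq_mult[OF assms(1) foldr_mult_carrier[OF assms(2)]] by simp

lemma mat_adj_foldr_mult:
  "set L \<subseteq> carrier_mat q q \<Longrightarrow>
   mat_adj (foldr (*) L (1\<^sub>m q)) = foldr (*) (rev (map mat_adj L)) (1\<^sub>m q)"
proof (induction L)
  case (Cons H L)
  then have H: "H \<in> carrier_mat q q" and L: "set L \<subseteq> carrier_mat q q" by simp_all
  have "mat_adj (foldr (*) (H # L) (1\<^sub>m q)) = foldr (*) (rev (map mat_adj L)) (1\<^sub>m q) * mat_adj H"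
    using Cons.IH[OF L] H foldr_mult_carrier[OF L] by (simp add: mat_adj_mult)
  also have "\<dots> = foldr (*) (rev (map mat_adj L)) (mat_adj H)"
    using L H by (intro foldr_mult_eq_mult[symmetric]) auto
  finally show ?case
    using H by simp
qed simp

lemma unitary_foldr_mult:
  "set L \<subseteq> carrier_mat q q \<Longrightarrow> \<forall>H\<in>set L. unitary_mat H \<Longrightarrow> unitary_mat (foldr (*) L (1\<^sub>m q))"
  by (induction L) (auto intro: unitary_mat_mult foldr_mult_carrier)

lemma tail_isometry_foldr_mult:
  "\<forall>H\<in>set L. tail_isometry q c H \<Longrightarrow> tail_isometry q c (foldr (*) L (1\<^sub>m q))"
  by (induction L) (auto intro: tail_isometry_mult tail_isometry_one)

text \<open>Taking \<open>l = j\<close> forces column \<open>j\<close> to vanish below the diagonal, so triangularity need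
  not be required separately.\<close>
definition gb_pivoted :: "nat \<Rightarrow> nat \<Rightarrow> (nat \<Rightarrow> complex vec) \<Rightarrow> bool" where
  "gb_pivoted s n x \<longleftrightarrow> (\<forall>j<s. \<forall>l. j \<le> l \<and> l < n \<longrightarrow> tail_norm2 (x l) j \<le> (cmod (x j $ j))\<^sup>2)"

lemma gb_pivotedD:
  "gb_pivoted s n x \<Longrightarrow> j < s \<Longrightarrow> j \<le> l \<Longrightarrow> l < n \<Longrightarrow> tail_norm2 (x l) j \<le> (cmod (x j $ j))\<^sup>2"
  by (simp add: gb_pivoted_def)

lemma gb_pivoted_antimono: "s' \<le> s \<Longrightarrow> gb_pivoted s n x \<Longrightarrow> gb_pivoted s' n x"
  by (simp add: gb_pivoted_def)

lemma gb_pivoted_tail_zero: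
  assumes "gb_pivoted s n x" "j < s" "j < n" "j < dim_vec (x j)" "j < r"
  shows "tail_norm2 (x j) r = 0"
proof -
  have "tail_norm2 (x j) (Suc j) \<le> 0"
    using gb_pivotedD[OF assms(1,2) order_refl assms(3)] tail_norm2_Suc[OF assms(4)] by linarith
  then show ?thesis
    using tail_norm2_antimono[of "Suc j" r "x j"] tail_norm2_nonneg[of "x j" r] assms(5) by simp
qed

lemma gb_pivoted_diag_antimono:
  assumes "gb_pivoted s n x" "i \<le> j" "j < s" "j < n" "j < dim_vec (x j)"
  shows "(cmod (x j $ j))\<^sup>2 \<le> (cmod (x i $ i))\<^sup>2"
  using entry_le_tail_norm2[OF assms(5)] tail_norm2_antimono[OF assms(2), of "x j"]
    gb_pivotedD[OF assms(1), of i j] assms(2-4)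
  by linarith

lemma gb_pivoted_cong:
  assumes "\<And>l. l < n \<Longrightarrow> x l = y l"
  shows "gb_pivoted s n x = gb_pivoted s n y"
proof -
  have "tail_norm2 (x l) j \<le> (cmod (x j $ j))\<^sup>2 \<longleftrightarrow> tail_norm2 (y l) j \<le> (cmod (y j $ j))\<^sup>2"
    if "j \<le> l" "l < n" for j l
    using that assms by simp
  then show ?thesis unfolding gb_pivoted_def by blast
qed

lemma gb_pivoted_reindex:
  assumes piv: "gb_pivoted s n x"
    and head: "\<And>l. l < s \<Longrightarrow> y l = x l"
    and tail: "\<And>l. s \<le> l \<Longrightarrow> l < n \<Longrightarrow> \<exists>j. s \<le> j \<and> j < n \<and> y l = x j"
  shows "gb_pivoted s n y"
  unfolding gb_pivoted_def
proof (intro allI impI)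
  fix j l assume j: "j < s" and l: "j \<le> l \<and> l < n"
  show "tail_norm2 (y l) j \<le> (cmod (y j $ j))\<^sup>2"
  proof (cases "l < s")
    case True
    then show ?thesis using piv j l by (simp add: head gb_pivotedD)
  next
    case False
    with tail[of l] l obtain j' where "s \<le> j'" "j' < n" "y l = x j'" by auto
    then show ?thesis using piv j by (simp add: head gb_pivotedD)
  qed
qed

lemma gb_pivoted_SucI:
  assumes "gb_pivoted i n x" "\<And>l. i \<le> l \<Longrightarrow> l < n \<Longrightarrow> tail_norm2 (x l) i \<le> (cmod (x i $ i))\<^sup>2"
  shows "gb_pivoted (Suc i) n x"
  using assms by (auto simp: gb_pivoted_def less_Suc_eq)

text \<open>The first \<open>s\<close> columns vanish below row \<open>s\<close>, so \<open>M\<close> leaves them alone.\<close>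
lemma gb_pivoted_tail_isometry:
  assumes x: "\<And>l. l < n \<Longrightarrow> x l \<in> carrier_vec q"
    and piv: "gb_pivoted s n x" and M: "tail_isometry q s M" and "s \<le> q"
  shows "gb_pivoted s n (\<lambda>l. M *\<^sub>v x l)"
  unfolding gb_pivoted_def
proof (intro allI impI)
  fix j l assume j: "j < s" and l: "j \<le> l \<and> l < n"
  have "tail_norm2 (x j) s = 0"
    using gb_pivoted_tail_zero[OF piv j _ _ j] l x[of j] \<open>s \<le> q\<close> j by simp
  then have "M *\<^sub>v x j = x j"
    using l x by (intro tail_isometry_fixes_vanishing_tail[OF M]) auto
  moreover have "tail_norm2 (M *\<^sub>v x l) j = tail_norm2 (x l) j"
    using tail_isometry_tail[OF tail_isometry_antimono[OF _ M] x] j l by simp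
  ultimately show "tail_norm2 (M *\<^sub>v x l) j \<le> (cmod ((M *\<^sub>v x j) $ j))\<^sup>2"
    using gb_pivotedD[OF piv j] l by simp
qed

lemma GB_form_if_gb_pivoted:
  assumes W: "W \<in> carrier_mat m n" and "k \<le> min m n" and piv: "gb_pivoted k n (col W)"
  shows "GB_form k W"
proof -
  have tail_zero: "tail_norm2 (col W j) (Suc j) = 0" if "j < k" for j
    using gb_pivoted_tail_zero[OF piv that] that assms by simp
  have below_diag: "W $$ (i, j) = 0" if "j < k" "j < i" "i < m" for i j
    using tail_zero[of j] that assms unfolding tail_norm2_eq_0_iff by auto
  have diag: "cmod (W $$ (i, i)) = Max ((\<lambda>j. sqrt (colnorm2 W i j)) ` {i..<n})" if i: "i < k" for i
  proof -
    have "i < m" "i < n" using i assms by simp_all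
    define d where "d = cmod (W $$ (i, i))"
    have le: "sqrt (colnorm2 W i j) \<le> d" if "j \<in> {i..<n}" for j
    proof -
      have "colnorm2 W i j \<le> d\<^sup>2"
        using that gb_pivotedD[OF piv i, of j] W \<open>i < m\<close> by (simp add: colnorm2_eq_tail_norm2 d_def)
      then show ?thesis by (simp add: d_def real_le_lsqrt)
    qed
    have "colnorm2 W i i = d\<^sup>2"
      using tail_norm2_Suc[of i "col W i"] tail_zero[OF i] W \<open>i < m\<close> \<open>i < n\<close>
      by (simp add: colnorm2_eq_tail_norm2 d_def)
    then have "d = sqrt (colnorm2 W i i)" by (simp add: d_def)
    then show ?thesis
      unfolding d_def[symmetric] using le \<open>i < n\<close> by (intro Max_eqI[symmetric]) auto
  qed
  show ?thesis
    unfolding GB_form_def using assms below_diag diag by auto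
qed

lemma gb_pivoted_Suc:
  assumes x: "\<And>l. l < n \<Longrightarrow> x l \<in> carrier_vec q"
    and piv: "gb_pivoted i n x" and "i < q"
    and pivot_col: "\<And>l. i \<le> l \<Longrightarrow> l < n \<Longrightarrow> tail_norm2 (x l) i \<le> tail_norm2 (x i) i"
    and H: "tail_isometry q i H" and diag: "(cmod ((H *\<^sub>v x i) $ i))\<^sup>2 = tail_norm2 (x i) i"
  shows "gb_pivoted (Suc i) n (\<lambda>l. H *\<^sub>v x l)"
proof (rule gb_pivoted_SucI)
  show "gb_pivoted i n (\<lambda>l. H *\<^sub>v x l)"
    using \<open>i < q\<close> by (intro gb_pivoted_tail_isometry[OF x piv H]) simp_all
  show "tail_norm2 (H *\<^sub>v x l) i \<le> (cmod ((H *\<^sub>v x i) $ i))\<^sup>2" if "i \<le> l" "l < n" for l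
    using tail_isometry_tail[OF H x] pivot_col that diag by simp
qed

lemma gb_pivoted_append:
  assumes y: "\<And>l. l < n \<Longrightarrow> y l \<in> carrier_vec (s + q)" and piv: "gb_pivoted s n y"
    and tails: "gb_pivoted c (n - s) (\<lambda>l. vec_last (y (s + l)) q)" and "c \<le> q"
  shows "gb_pivoted (s + c) n y"
  unfolding gb_pivoted_def
proof (intro allI impI)
  fix j l assume j: "j < s + c" and l: "j \<le> l \<and> l < n"
  show "tail_norm2 (y l) j \<le> (cmod (y j $ j))\<^sup>2"
  proof (cases "j < s")
    case True
    then show ?thesis using gb_pivotedD[OF piv True] l by simp
  next
    case False
    define i l' where "i = j - s" and "l' = l - s"
    have ji: "j = s + i" "l = s + l'" "i < c" "i \<le> l'" "l' < n - s"
      using False j l unfolding i_def l'_def by arith+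
    have "tail_norm2 (y l) j = tail_norm2 (vec_last (y (s + l')) q) i"
      using tail_norm2_vec_last y l by (simp add: ji)
    also have "\<dots> \<le> (cmod (vec_last (y (s + i)) q $ i))\<^sup>2"
      using gb_pivotedD[OF tails] ji by simp
    also have "vec_last (y (s + i)) q $ i = y j $ j"
      using y[of j] l ji \<open>c \<le> q\<close> by (simp add: vec_last_def)
    finally show ?thesis .
  qed
qed

text \<open>The last pivot of \<open>R\<close> is its smallest, so it bounds the columns beyond \<open>b\<close>.\<close>
lemma gb_pivoted_factor:
  assumes z: "\<And>l. z l \<in> carrier_vec q"
    and V: "tail_isometry q c V" and R: "R \<in> carrier_mat q b" and R_piv: "gb_pivoted c b (col R)"
    and cand: "\<And>l. l < b \<Longrightarrow> col R l = V *\<^sub>v z l"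
    and rest: "\<And>l. b \<le> l \<Longrightarrow> l < N \<Longrightarrow> tail_norm2 (z l) 0 \<le> (cmod (R $$ (c - 1, c - 1)))\<^sup>2"
    and c: "0 < c" "c \<le> b" "c \<le> q"
  shows "gb_pivoted c N z"
  unfolding gb_pivoted_def
proof (intro allI impI)
  fix i l assume "i < c" and l: "i \<le> l \<and> l < N"
  have "z i $ i = col R i $ i"
    using cand[of i] tail_isometry_head[OF V z \<open>i < c\<close>] \<open>i < c\<close> c by simp
  also have "\<dots> = R $$ (i, i)"
    using R \<open>i < c\<close> c by simp
  finally have diag: "z i $ i = R $$ (i, i)" .
  show "tail_norm2 (z l) i \<le> (cmod (z i $ i))\<^sup>2"
  proof (cases "l < b")
    case True
    have "tail_norm2 (z l) i = tail_norm2 (col R l) i"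
      using cand[OF True] tail_isometry_tail[OF tail_isometry_antimono[OF _ V] z] \<open>i < c\<close> by simp
    also have "\<dots> \<le> (cmod (R $$ (i, i)))\<^sup>2"
      using gb_pivotedD[OF R_piv \<open>i < c\<close>] l True R \<open>i < c\<close> c by simp
    finally show ?thesis by (simp add: diag)
  next
    case False
    have "tail_norm2 (z l) i \<le> tail_norm2 (z l) 0" by (rule tail_norm2_antimono) simp
    also have "\<dots> \<le> (cmod (R $$ (c - 1, c - 1)))\<^sup>2"
      using rest False l by simp
    also have "\<dots> \<le> (cmod (R $$ (i, i)))\<^sup>2"
      using gb_pivoted_diag_antimono[OF R_piv, of i "c - 1"] R \<open>i < c\<close> c by simp
    finally show ?thesis by (simp add: diag)
  qed
qed

lemma gb_pivoted_commit:
  fixes x :: "nat \<Rightarrow> complex vec"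
  assumes x: "\<And>l. l < n \<Longrightarrow> x l \<in> carrier_vec (s + q)"
    and piv: "gb_pivoted s n x"
    and M: "tail_isometry (s + q) s M"
    and M_last: "\<And>v. v \<in> carrier_vec (s + q) \<Longrightarrow> vec_last (M *\<^sub>v v) q = U *\<^sub>v vec_last v q"
    and U: "tail_isometry q 0 U" and V: "tail_isometry q c V"
    and R: "R \<in> carrier_mat q b" and R_piv: "gb_pivoted c b (col R)"
    and cand: "\<And>l. l < b \<Longrightarrow> col R l = V *\<^sub>v (U *\<^sub>v vec_last (x (s + l)) q)"
    and rest: "\<And>l. s + b \<le> l \<Longrightarrow> l < n \<Longrightarrow> tail_norm2 (x l) s \<le> (cmod (R $$ (c - 1, c - 1)))\<^sup>2"
    and c: "0 < c" "c \<le> b" "c \<le> q"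
  shows "gb_pivoted (s + c) n (\<lambda>l. M *\<^sub>v x l)"
proof (rule gb_pivoted_append)
  have M_carrier: "M \<in> carrier_mat (s + q) (s + q)" by (rule tail_isometry_carrier[OF M])
  then show "M *\<^sub>v x l \<in> carrier_vec (s + q)" if "l < n" for l using x that by simp
  show "gb_pivoted s n (\<lambda>l. M *\<^sub>v x l)" by (rule gb_pivoted_tail_isometry[OF x piv M le_add1])
  have U_carrier: "U \<in> carrier_mat q q" by (rule tail_isometry_carrier[OF U])
  have "gb_pivoted c (n - s) (\<lambda>l. U *\<^sub>v vec_last (x (s + l)) q)"
  proof (rule gb_pivoted_factor[OF _ V R R_piv cand _ c])
    show "U *\<^sub>v vec_last (x (s + l)) q \<in> carrier_vec q" for l using U_carrier by simp
    show "tail_norm2 (U *\<^sub>v vec_last (x (s + l)) q) 0 \<le> (cmod (R $$ (c - 1, c - 1)))\<^sup>2"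
      if "b \<le> l" "l < n - s" for l
      using tail_isometry_tail[OF U] tail_norm2_vec_last[of "x (s + l)" s q 0] x[of "s + l"]
        rest[of "s + l"] that by simp
  qed
  moreover have "vec_last (M *\<^sub>v x (s + l)) q = U *\<^sub>v vec_last (x (s + l)) q" if "l < n - s" for l
    using M_last x that by simp
  ultimately show "gb_pivoted c (n - s) (\<lambda>l. vec_last (M *\<^sub>v x (s + l)) q)"
    by (subst gb_pivoted_cong) auto
qed (use c in simp)

lemma swp_below: "l < i \<Longrightarrow> i \<le> jm \<Longrightarrow> swp i jm l = l"
  by (simp add: swp_def)

lemma swp_ge: "i \<le> l \<Longrightarrow> i \<le> jm \<Longrightarrow> i \<le> swp i jm l"
  by (simp add: swp_def)

lemma swp_less: "l < w \<Longrightarrow> i < w \<Longrightarrow> jm < w \<Longrightarrow> swp i jm l < w"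
  by (simp add: swp_def)

lemma swap_cols_dim [simp]:
  "dim_row (swap_cols R i jm) = dim_row R" "dim_col (swap_cols R i jm) = dim_col R"
  by (simp_all add: swap_cols_def)

lemma col_swap_cols:
  assumes "l < dim_col R" "i < dim_col R" "jm < dim_col R"
  shows "col (swap_cols R i jm) l = col R (swp i jm l)"
  using assms swp_less[OF assms] by (intro eq_vecI) (auto simp: swap_cols_def)

lemma gb_pivoted_householder_step:
  assumes R: "R \<in> carrier_mat q w" and piv: "gb_pivoted i w (col R)"
    and "i < q" "i \<le> jm" "jm < w"
    and pivot: "\<forall>j\<in>{i..<w}. colnorm2 R i j \<le> colnorm2 R i jm"
    and H: "householder q i (col (swap_cols R i jm) i) H"
  shows "gb_pivoted (Suc i) w (col (H * swap_cols R i jm))"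
proof -
  define S where "S = swap_cols R i jm"
  have S: "S \<in> carrier_mat q w" using R by (intro carrier_matI) (simp_all add: S_def)
  have col_S: "col S l = col R (swp i jm l)" if "l < w" for l
    using that R \<open>i \<le> jm\<close> \<open>jm < w\<close> by (simp add: S_def col_swap_cols)
  have S_piv: "gb_pivoted i w (col S)"
  proof (rule gb_pivoted_reindex[OF piv])
    show "col S l = col R l" if "l < i" for l
      using that col_S[of l] swp_below[OF that \<open>i \<le> jm\<close>] \<open>i \<le> jm\<close> \<open>jm < w\<close> by simp
    show "\<exists>j. i \<le> j \<and> j < w \<and> col S l = col R j" if "i \<le> l" "l < w" for l
      using that col_S swp_ge[OF that(1) \<open>i \<le> jm\<close>] swp_less[OF that(2), of i jm] \<open>jm < w\<close> by auto
  qed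
  have pivot_col: "tail_norm2 (col S l) i \<le> tail_norm2 (col S i) i" if "i \<le> l" "l < w" for l
  proof -
    have "tail_norm2 (col S l) i = colnorm2 R i (swp i jm l)"
      using that col_S R swp_less[of l w i jm] \<open>jm < w\<close> by (simp add: colnorm2_eq_tail_norm2)
    also have "\<dots> \<le> colnorm2 R i jm"
      using pivot swp_ge[OF that(1) \<open>i \<le> jm\<close>] swp_less[OF that(2), of i jm] \<open>i \<le> jm\<close> \<open>jm < w\<close>
      by auto
    also have "\<dots> = tail_norm2 (col S i) i"
      using col_S[of i] R \<open>i \<le> jm\<close> \<open>jm < w\<close> by (simp add: colnorm2_eq_tail_norm2 swp_def)
    finally show ?thesis .
  qed
  have "gb_pivoted (Suc i) w (\<lambda>l. H *\<^sub>v col S l)"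
    using S \<open>i < q\<close> \<open>i \<le> jm\<close> \<open>jm < w\<close> H col_dim[of S i]
    by (intro gb_pivoted_Suc[OF _ S_piv _ pivot_col householder_tail_isometry householder_diag])
      (auto simp: S_def)
  moreover have "col (H * S) l = H *\<^sub>v col S l" if "l < w" for l
    using col_mult2[OF householder_carrier[OF H] S that] .
  ultimately show ?thesis
    unfolding S_def[symmetric] by (subst gb_pivoted_cong) auto
qed

definition householder_seq :: "nat \<Rightarrow> complex mat list \<Rightarrow> bool" where
  "householder_seq q Hs \<longleftrightarrow> (\<forall>j<length Hs. \<exists>x. householder q j x (Hs ! j))"

lemma householder_seq_snoc:
  "householder_seq q Hs \<Longrightarrow> householder q (length Hs) x H \<Longrightarrow> householder_seq q (Hs @ [H])"
  by (auto simp: householder_seq_def nth_append less_Suc_eq)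

lemma householder_seq_take: "householder_seq q Hs \<Longrightarrow> householder_seq q (take c Hs)"
  by (simp add: householder_seq_def)

lemma householder_seq_mem: "householder_seq q Hs \<Longrightarrow> H \<in> set Hs \<Longrightarrow> \<exists>j x. householder q j x H"
  unfolding householder_seq_def in_set_conv_nth by blast

lemma householder_seq_carrier: "householder_seq q Hs \<Longrightarrow> set Hs \<subseteq> carrier_mat q q"
  using householder_seq_mem householder_carrier by blast

lemma householder_seq_unitary: "householder_seq q Hs \<Longrightarrow> \<forall>H\<in>set Hs. unitary_mat H"
  using householder_seq_mem householder_unitary by blast

lemma householder_seq_hermitian: "householder_seq q Hs \<Longrightarrow> map mat_adj Hs = Hs"
  by (rule map_idI) (use householder_seq_mem householder_hermitian in blast)

text \<open>\<open>H\<^sub>d \<cdots> H\<^sub>1 = (H\<^sub>d \<cdots> H\<^sub>c\<^sub>+\<^sub>1) (H\<^sub>1 \<cdots> H\<^sub>c)\<^sup>*\<close>, using that the reflections are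
  Hermitian.\<close>
lemma householder_seq_prod_split:
  assumes Hs: "householder_seq q Hs"
  shows "foldr (*) (rev Hs) (1\<^sub>m q)
    = foldr (*) (rev (drop c Hs)) (1\<^sub>m q) * mat_adj (foldr (*) (take c Hs) (1\<^sub>m q))"
proof -
  have carrier: "set (take c Hs) \<subseteq> carrier_mat q q" "set (drop c Hs) \<subseteq> carrier_mat q q"
    using subset_trans[OF set_take_subset householder_seq_carrier[OF Hs]]
      subset_trans[OF set_drop_subset householder_seq_carrier[OF Hs]] .
  have "mat_adj (foldr (*) (take c Hs) (1\<^sub>m q)) = foldr (*) (rev (take c Hs)) (1\<^sub>m q)"
    using mat_adj_foldr_mult[OF carrier(1)] householder_seq_hermitian[OF householder_seq_take[OF Hs]]
    by simp
  moreover have "rev Hs = rev (drop c Hs) @ rev (take c Hs)"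
    by (metis append_take_drop_id rev_append)
  ultimately show ?thesis
    using foldr_mult_append[of "rev (drop c Hs)" q "rev (take c Hs)"] carrier by simp
qed

lemma tail_isometry_householder_seq_drop:
  assumes Hs: "householder_seq q Hs"
  shows "tail_isometry q c (foldr (*) (rev (drop c Hs)) (1\<^sub>m q))"
proof (rule tail_isometry_foldr_mult, rule ballI)
  fix H assume "H \<in> set (rev (drop c Hs))"
  then obtain j where "j < length Hs - c" "H = Hs ! (c + j)"
    by (auto simp: in_set_conv_nth)
  moreover from this(1) Hs have "\<exists>x. householder q (c + j) x (Hs ! (c + j))"
    by (simp add: householder_seq_def)
  ultimately obtain x where "householder q (c + j) x H" by blast
  then have "tail_isometry q (c + j) H" by (rule householder_tail_isometry)
  then show "tail_isometry q c H" by (rule tail_isometry_antimono[rotated]) simp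
qed

lemma gb_steps_invariant:
  assumes "gb_steps B i \<sigma> Hs R"
  shows "R \<in> carrier_mat (dim_row B) (dim_col B) \<and> length Hs = i
    \<and> householder_seq (dim_row B) Hs
    \<and> (\<forall>l<dim_col B. \<sigma> l < dim_col B
         \<and> col R l = foldr (*) (rev Hs) (1\<^sub>m (dim_row B)) *\<^sub>v col B (\<sigma> l))
    \<and> gb_pivoted i (dim_col B) (col R)"
  using assms
proof (induction rule: gb_steps.induct)
  case gb_init
  then show ?case by (auto simp: gb_pivoted_def householder_seq_def)
next
  case (gb_step i \<sigma> Hs R jm H)
  define q where "q = dim_row B"
  define w where "w = dim_col B"
  define S where "S = swap_cols R i jm"
  define P where "P = foldr (*) (rev Hs) (1\<^sub>m q)"
  have R: "R \<in> carrier_mat q w" and len: "length Hs = i"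
    and Hs: "householder_seq q Hs"
    and cols: "\<forall>l<w. \<sigma> l < w \<and> col R l = P *\<^sub>v col B (\<sigma> l)"
    and piv: "gb_pivoted i w (col R)"
    using gb_step.IH by (simp_all add: q_def w_def P_def)
  have "i < q" "i < w" "i \<le> jm" "jm < w"
    and pivot: "\<forall>j\<in>{i..<w}. colnorm2 R i j \<le> colnorm2 R i jm"
    and H: "householder q i (col S i) H"
    using gb_step.hyps by (simp_all add: q_def w_def S_def)
  have H_carrier: "H \<in> carrier_mat q q" by (rule householder_carrier[OF H])
  have P: "P \<in> carrier_mat q q"
    unfolding P_def using householder_seq_carrier[OF Hs] by (intro foldr_mult_carrier) auto
  have S: "S \<in> carrier_mat q w" using R by (intro carrier_matI) (simp_all add: S_def)
  have "col (H * S) l = (H * P) *\<^sub>v col B ((\<sigma> \<circ> swp i jm) l)"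
    and "(\<sigma> \<circ> swp i jm) l < w" if "l < w" for l
  proof -
    have l': "swp i jm l < w" using swp_less[OF that \<open>i < w\<close> \<open>jm < w\<close>] .
    have "col (H * S) l = H *\<^sub>v col S l"
      using col_mult2[OF H_carrier S that] .
    also have "\<dots> = H *\<^sub>v col R (swp i jm l)"
      using that R \<open>i < w\<close> \<open>jm < w\<close> by (simp add: S_def col_swap_cols)
    also have "\<dots> = (H * P) *\<^sub>v col B (\<sigma> (swp i jm l))"
      using cols l' H_carrier P by (simp add: w_def q_def)
    finally show "col (H * S) l = (H * P) *\<^sub>v col B ((\<sigma> \<circ> swp i jm) l)" by simp
    show "(\<sigma> \<circ> swp i jm) l < w" using cols l' by simp
  qed
  moreover have "householder_seq q (Hs @ [H])"
    using householder_seq_snoc[OF Hs] H len by simp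
  moreover have "gb_pivoted (Suc i) w (col (H * S))"
    using gb_pivoted_householder_step[OF R piv \<open>i < q\<close> \<open>i \<le> jm\<close> \<open>jm < w\<close> pivot] H
    by (simp add: S_def)
  ultimately show ?case
    using S H_carrier len by (simp add: q_def w_def P_def S_def)
qed

abbreviation block_diag_one :: "nat \<Rightarrow> nat \<Rightarrow> complex mat \<Rightarrow> complex mat" where
  "block_diag_one s q G \<equiv> four_block_mat (1\<^sub>m s) (0\<^sub>m s q) (0\<^sub>m q s) G"

lemma mat_adj_block_diag_one:
  assumes G: "G \<in> carrier_mat q q"
  shows "mat_adj (block_diag_one s q G) = block_diag_one s q (mat_adj G)"
proof (rule eq_matI)
  fix i j assume "i < dim_row (block_diag_one s q (mat_adj G))" "j < dim_col (block_diag_one s q (mat_adj G))"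
  then have "i < s + q" "j < s + q" using G by auto
  then show "mat_adj (block_diag_one s q G) $$ (i, j) = block_diag_one s q (mat_adj G) $$ (i, j)"
    using G by (cases "i < s"; cases "j < s") auto
qed (use G in auto)

lemma block_diag_one_mult_vec:
  assumes G: "G \<in> carrier_mat q q" and v: "v \<in> carrier_vec (s + q)"
  shows "block_diag_one s q G *\<^sub>v v = vec_first v s @\<^sub>v (G *\<^sub>v vec_last v q)"
proof -
  have "block_diag_one s q G *\<^sub>v v = block_diag_one s q G *\<^sub>v (vec_first v s @\<^sub>v vec_last v q)"
    using v by simp
  also have "\<dots> = 1\<^sub>m s *\<^sub>v vec_first v s @\<^sub>v G *\<^sub>v vec_last v q"
    by (rule mult_mat_vec_split) (use G in auto)
  finally show ?thesis by simp
qed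

lemma vec_last_append: "b \<in> carrier_vec q \<Longrightarrow> vec_last (a @\<^sub>v b) q = b"
  by (intro eq_vecI) (auto simp: vec_last_def)

lemma vec_last_block_diag_one_mult_vec:
  assumes "G \<in> carrier_mat q q" "v \<in> carrier_vec (s + q)"
  shows "vec_last (block_diag_one s q G *\<^sub>v v) q = G *\<^sub>v vec_last v q"
  using assms by (simp add: block_diag_one_mult_vec vec_last_append)

lemma unitary_block_diag_one:
  assumes G: "G \<in> carrier_mat q q" "unitary_mat G"
  shows "unitary_mat (block_diag_one s q G)"
proof (rule unitary_matI)
  show "block_diag_one s q G \<in> carrier_mat (s + q) (s + q)" using G by simp
  have "mat_adj (block_diag_one s q G) * block_diag_one s q G
    = four_block_mat (1\<^sub>m s * 1\<^sub>m s + 0\<^sub>m s q * 0\<^sub>m q s) (1\<^sub>m s * 0\<^sub>m s q + 0\<^sub>m s q * G)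
        (0\<^sub>m q s * 1\<^sub>m s + mat_adj G * 0\<^sub>m q s) (0\<^sub>m q s * 0\<^sub>m s q + mat_adj G * G)"
    unfolding mat_adj_block_diag_one[OF G(1)] by (rule mult_four_block_mat) (use G in auto)
  also have "\<dots> = 1\<^sub>m (s + q)"
    using G by (simp add: unitary_matD)
  finally show "mat_adj (block_diag_one s q G) * block_diag_one s q G = 1\<^sub>m (s + q)" .
qed

lemma tail_isometry_block_diag_one:
  assumes G: "G \<in> carrier_mat q q" "unitary_mat G"
  shows "tail_isometry (s + q) s (block_diag_one s q G)"
proof (rule tail_isometryI)
  fix x :: "complex vec" and r assume "x \<in> carrier_vec (s + q)" "r < s"
  then show "(block_diag_one s q G *\<^sub>v x) $ r = x $ r"
    using G by (simp add: block_diag_one_mult_vec vec_first_def)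
qed (use G unitary_block_diag_one in auto)

lemma perm_mat_carrier: "perm_mat n p \<in> carrier_mat n n"
  by (simp add: perm_mat_def)

lemma perm_mat_dim [simp]: "dim_row (perm_mat n p) = n" "dim_col (perm_mat n p) = n"
  by (simp_all add: perm_mat_def)

definition qap_col :: "complex mat \<Rightarrow> complex mat \<Rightarrow> (nat \<Rightarrow> nat) \<Rightarrow> nat \<Rightarrow> complex vec" where
  "qap_col A Q p l = mat_adj Q *\<^sub>v col A (p l)"

lemma col_qap:
  assumes A: "A \<in> carrier_mat m n" and Q: "Q \<in> carrier_mat m m" and "j < n" "p j < n"
  shows "col (mat_adj Q * A * perm_mat n p) j = qap_col A Q p j"
proof -
  have P: "perm_mat n p \<in> carrier_mat n n" by (rule perm_mat_carrier)
  have QA: "mat_adj Q * A \<in> carrier_mat m n" using mult_carrier_mat[OF mat_adj_carrier[OF Q] A] .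
  have "col (perm_mat n p) j = unit_vec n (p j)"
    using assms by (intro eq_vecI) (auto simp: perm_mat_def)
  then have "col (mat_adj Q * A * perm_mat n p) j = (mat_adj Q * A) *\<^sub>v unit_vec n (p j)"
    using col_mult2[OF QA P \<open>j < n\<close>] by simp
  also have "\<dots> = col (mat_adj Q * A) (p j)"
    using QA \<open>p j < n\<close> by (intro eq_vecI) (auto simp: scalar_prod_right_unit)
  also have "\<dots> = qap_col A Q p j"
    using col_mult2[OF mat_adj_carrier[OF Q] A \<open>p j < n\<close>] by (simp add: qap_col_def)
  finally show ?thesis .
qed

lemma qap_col_carrier: "Q \<in> carrier_mat m m \<Longrightarrow> qap_col A Q p l \<in> carrier_vec m"
  by (simp add: qap_col_def carrier_vecI)

lemma qap_col_mult:
  assumes "A \<in> carrier_mat m n" "Q \<in> carrier_mat m m" "D \<in> carrier_mat m m"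
  shows "qap_col A (Q * D) p l = mat_adj D *\<^sub>v qap_col A Q p l"
proof -
  have "qap_col A (Q * D) p l = (mat_adj D * mat_adj Q) *\<^sub>v col A (p l)"
    using assms by (simp add: qap_col_def mat_adj_mult)
  also have "\<dots> = mat_adj D *\<^sub>v qap_col A Q p l"
    unfolding qap_col_def by (rule assoc_mult_mat_vec) (use assms in auto)
  finally show ?thesis .
qed

lemma tail_norm2_qap_col:
  assumes A: "A \<in> carrier_mat m n" and Q: "Q \<in> carrier_mat m m" "unitary_mat Q" and "p l < n"
  shows "tail_norm2 (qap_col A Q p l) 0 = colnorm2 A 0 (p l)"
  using tail_norm2_unitary_mult[OF mat_adj_carrier[OF Q(1)] unitary_mat_adj[OF Q], of "col A (p l)"]
    A \<open>p l < n\<close>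
  by (simp add: qap_col_def colnorm2_eq_tail_norm2)

lemma cc_gamma_tracked:
  assumes A: "A \<in> carrier_mat m n" and Q: "Q \<in> carrier_mat m m" and "j < s + t" "j < n" "p j < n"
  shows "cc_gamma A p Q s t j = tail_norm2 (qap_col A Q p j) s"
proof -
  have "cc_gamma A p Q s t j = colnorm2 (mat_adj Q * A * perm_mat n p) s j"
    using A \<open>j < s + t\<close> by (simp add: cc_gamma_def)
  also have "\<dots> = tail_norm2 (col (mat_adj Q * A * perm_mat n p) j) s"
    using A \<open>j < n\<close> by (simp add: colnorm2_eq_tail_norm2)
  finally show ?thesis
    using col_qap[OF A Q, of j p] assms by simp
qed

lemma cand_enum_mem: "finite C \<Longrightarrow> l < card C \<Longrightarrow> cand_enum C l \<in> C"
  by (metis cand_enum_def length_sorted_list_of_set nth_mem set_sorted_list_of_set)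

lemma col_cand_mat:
  assumes A: "A \<in> carrier_mat m n" and Q: "Q \<in> carrier_mat m m" and "s \<le> m"
    and C: "finite C" "C \<subseteq> {..<n}" and p: "\<forall>j\<in>C. p j < n" and "l < card C"
  shows "col (cand_mat A p Q s C) l = vec_last (qap_col A Q p (cand_enum C l)) (m - s)"
proof -
  have j: "cand_enum C l < n" "p (cand_enum C l) < n"
    using cand_enum_mem[OF C(1) \<open>l < card C\<close>] C p by auto
  show ?thesis
  proof (rule eq_vecI)
    fix i assume "i < dim_vec (vec_last (qap_col A Q p (cand_enum C l)) (m - s))"
    then have i: "s + i < m" using \<open>s \<le> m\<close> by simp
    have "col (cand_mat A p Q s C) l $ i = (mat_adj Q * A * perm_mat n p) $$ (s + i, cand_enum C l)"
      using A i \<open>l < card C\<close> by (simp add: cand_mat_def)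
    also have "\<dots> = col (mat_adj Q * A * perm_mat n p) (cand_enum C l) $ (s + i)"
      using A Q i j by simp
    also have "\<dots> = qap_col A Q p (cand_enum C l) $ (s + i)"
      using col_qap[OF A Q, of "cand_enum C l" p] j by simp
    also have "\<dots> = vec_last (qap_col A Q p (cand_enum C l)) (m - s) $ i"
      using qap_col_carrier[OF Q, of A p "cand_enum C l"] i by (simp add: vec_last_def)
    finally show "col (cand_mat A p Q s C) l $ i = vec_last (qap_col A Q p (cand_enum C l)) (m - s) $ i" .
  qed (use A \<open>l < card C\<close> in \<open>simp add: cand_mat_def\<close>)
qed

text \<open>Committing the first \<open>c\<close> reflections: \<open>R\<close> arises from \<open>(H\<^sub>1 \<cdots> H\<^sub>c)\<^sup>* B\<close> by the remaining
  reflections, which fix the first \<open>c\<close> coordinates.\<close>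
lemma gb_steps_commit_factors:
  fixes c :: nat
  assumes gb: "gb_steps B d \<sigma> Hs R" and B: "B \<in> carrier_mat q b"
  defines "G \<equiv> foldr (*) (take c Hs) (1\<^sub>m q)" and "V \<equiv> foldr (*) (rev (drop c Hs)) (1\<^sub>m q)"
  shows "G \<in> carrier_mat q q" "unitary_mat G" "tail_isometry q c V"
    and "\<And>l. l < b \<Longrightarrow> \<sigma> l < b \<and> col R l = V *\<^sub>v (mat_adj G *\<^sub>v col B (\<sigma> l))"
proof -
  have Hs: "householder_seq q Hs"
    and R_cols: "\<forall>l<b. \<sigma> l < b \<and> col R l = foldr (*) (rev Hs) (1\<^sub>m q) *\<^sub>v col B (\<sigma> l)"
    using gb_steps_invariant[OF gb] B by simp_all
  show G: "G \<in> carrier_mat q q" "unitary_mat G"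
    using householder_seq_carrier[OF householder_seq_take[OF Hs]]
      householder_seq_unitary[OF householder_seq_take[OF Hs]]
    by (simp_all add: G_def foldr_mult_carrier unitary_foldr_mult)
  show V: "tail_isometry q c V"
    unfolding V_def by (rule tail_isometry_householder_seq_drop[OF Hs])
  fix l assume "l < b"
  then have "\<sigma> l < b" and "col R l = (V * mat_adj G) *\<^sub>v col B (\<sigma> l)"
    using R_cols householder_seq_prod_split[OF Hs, of c] by (simp_all add: G_def V_def)
  moreover have "(V * mat_adj G) *\<^sub>v col B (\<sigma> l) = V *\<^sub>v (mat_adj G *\<^sub>v col B (\<sigma> l))"
    using tail_isometry_carrier[OF V] G B by (intro assoc_mult_mat_vec) auto
  ultimately show "\<sigma> l < b \<and> col R l = V *\<^sub>v (mat_adj G *\<^sub>v col B (\<sigma> l))" by simp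
qed

lemma cceqr_commit:
  assumes A: "A \<in> carrier_mat m n" and Q: "Q \<in> carrier_mat m m" "unitary_mat Q" and "s \<le> m"
    and piv: "gb_pivoted s n (qap_col A Q p)"
    and gb: "gb_steps B (min (m - s) b) \<sigma> Hs R" and B: "B \<in> carrier_mat (m - s) b"
    and cand: "\<And>l. l < b \<Longrightarrow> col B (\<sigma> l) = vec_last (qap_col A Q p (s + l)) (m - s)"
    and rest: "\<And>l. s + b \<le> l \<Longrightarrow> l < n \<Longrightarrow>
      tail_norm2 (qap_col A Q p l) s \<le> (cmod (R $$ (c - 1, c - 1)))\<^sup>2"
    and c: "1 \<le> c" "c \<le> min (m - s) b"
  defines "Q' \<equiv> Q * block_diag_one s (m - s) (foldr (*) (take c Hs) (1\<^sub>m (m - s)))"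
  shows "Q' \<in> carrier_mat m m \<and> unitary_mat Q' \<and> gb_pivoted (s + c) n (qap_col A Q' p)"
proof -
  define q where "q = m - s"
  have m: "m = s + q" using \<open>s \<le> m\<close> by (simp add: q_def)
  define G where "G = foldr (*) (take c Hs) (1\<^sub>m q)"
  define V where "V = foldr (*) (rev (drop c Hs)) (1\<^sub>m q)"
  define M where "M = block_diag_one s q (mat_adj G)"
  note factors = gb_steps_commit_factors[OF gb B[folded q_def], where c = c, folded G_def V_def]
  have G: "G \<in> carrier_mat q q" "unitary_mat G" using factors(1,2) .
  have D: "block_diag_one s q G \<in> carrier_mat m m" "unitary_mat (block_diag_one s q G)"
    using G m unitary_block_diag_one[OF G] by simp_all
  have R: "R \<in> carrier_mat q b" "gb_pivoted c b (col R)"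
    using gb_steps_invariant[OF gb] B c gb_pivoted_antimono[of c "min q b" b "col R"]
    by (simp_all add: q_def)
  have "gb_pivoted (s + c) n (\<lambda>l. M *\<^sub>v qap_col A Q p l)"
  proof (rule gb_pivoted_commit[OF _ piv _ _ _ factors(3) R])
    show "qap_col A Q p l \<in> carrier_vec (s + q)" for l using qap_col_carrier[OF Q(1)] m by simp
    show "tail_isometry (s + q) s M"
      unfolding M_def using G by (intro tail_isometry_block_diag_one unitary_mat_adj) auto
    show "vec_last (M *\<^sub>v v) q = mat_adj G *\<^sub>v vec_last v q" if "v \<in> carrier_vec (s + q)" for v
      unfolding M_def using G that by (intro vec_last_block_diag_one_mult_vec) auto
    show "tail_isometry q 0 (mat_adj G)"
      using G by (intro tail_isometryI unitary_mat_adj) auto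
    show "col R l = V *\<^sub>v (mat_adj G *\<^sub>v vec_last (qap_col A Q p (s + l)) q)" if "l < b" for l
      using factors(4)[OF that] cand[OF that] by (simp add: q_def)
  qed (use rest c in \<open>auto simp: q_def\<close>)
  moreover have "qap_col A Q' p = (\<lambda>l. M *\<^sub>v qap_col A Q p l)"
    using qap_col_mult[OF A Q(1) D(1)] mat_adj_block_diag_one[OF G(1)]
    by (auto simp: Q'_def M_def G_def q_def)
  ultimately show ?thesis
    using Q D unitary_mat_mult[OF Q(1,2) D] by (simp add: Q'_def G_def q_def)
qed

lemma gb_pivoted_qap_col_shuffle:
  assumes piv: "gb_pivoted s n (qap_col A Q p)" and "s \<le> a"
    and head: "\<And>l. l < a \<Longrightarrow> p' l = p l"
    and tail: "\<And>l. a \<le> l \<Longrightarrow> l < n \<Longrightarrow> \<exists>j. a \<le> j \<and> j < n \<and> p' l = p j"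
  shows "gb_pivoted s n (qap_col A Q p')"
proof (rule gb_pivoted_reindex[OF piv])
  show "qap_col A Q p' l = qap_col A Q p l" if "l < s" for l
    using that \<open>s \<le> a\<close> head by (simp add: qap_col_def)
  show "\<exists>j. s \<le> j \<and> j < n \<and> qap_col A Q p' l = qap_col A Q p j" if "s \<le> l" "l < n" for l
  proof (cases "l < a")
    case True
    then show ?thesis using that head by (auto simp: qap_col_def)
  next
    case False
    with tail[of l] that obtain j where "a \<le> j" "j < n" "p' l = p j" by auto
    with \<open>s \<le> a\<close> show ?thesis by (intro exI[of _ j]) (simp add: qap_col_def)
  qed
qed

lemma cceqr_collect_source:
  assumes C: "C \<subseteq> {s..<s+t}" "card C = b" and \<sigma>: "\<forall>l<b. \<sigma> l < b"
    and p1a: "\<forall>l<b. p1 (s + l) = p (cand_enum C (\<sigma> l))"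
    and p1b: "bij_betw p1 {s+b..<s+t} (p ` ({s..<s+t} - C))"
    and p1c: "\<forall>l. l < s \<or> s + t \<le> l \<longrightarrow> p1 l = p l"
    and "s \<le> l" "l < n" "s + t \<le> n"
  shows "\<exists>j. s \<le> j \<and> j < n \<and> p1 l = p j"
proof -
  consider "s + t \<le> l" | "l < s + b" | "s + b \<le> l" "l < s + t" by linarith
  then show ?thesis
  proof cases
    case 1
    then show ?thesis using p1c assms by (intro exI[of _ l]) auto
  next
    case 2
    define l' where "l' = l - s"
    have "l = s + l'" "l' < b" using 2 \<open>s \<le> l\<close> by (simp_all add: l'_def)
    moreover have "cand_enum C (\<sigma> l') \<in> C"
      using cand_enum_mem[of C "\<sigma> l'"] finite_subset[OF C(1)] C(2) \<sigma> \<open>l' < b\<close> by simp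
    ultimately show ?thesis using p1a C(1) \<open>s + t \<le> n\<close> by force
  next
    case 3
    then have "p1 l \<in> p ` ({s..<s+t} - C)" by (intro bij_betw_apply[OF p1b]) simp
    then obtain j where "j \<in> {s..<s+t} - C" "p1 l = p j" by blast
    with \<open>s + t \<le> n\<close> show ?thesis by (intro exI[of _ j]) auto
  qed
qed

lemma cceqr_collect_rest:
  assumes A: "A \<in> carrier_mat m n" and Q: "Q \<in> carrier_mat m m" "unitary_mat Q"
    and pn: "\<forall>l<n. p l < n"
    and \<delta>: "\<forall>j\<in>{s..<s+t} - C. tail_norm2 (qap_col A Q p j) s \<le> \<delta>"
    and \<mu>: "\<forall>l. s + t \<le> l \<and> l < n \<longrightarrow> colnorm2 A 0 (p l) \<le> \<mu>"
    and p1b: "bij_betw p1 {s+b..<s+t} (p ` ({s..<s+t} - C))"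
    and p1c: "\<forall>l. l < s \<or> s + t \<le> l \<longrightarrow> p1 l = p l"
    and "s + b \<le> l" "l < n"
  shows "tail_norm2 (qap_col A Q p1 l) s \<le> max \<delta> \<mu>"
proof (cases "l < s + t")
  case True
  then have "p1 l \<in> p ` ({s..<s+t} - C)" using \<open>s + b \<le> l\<close> by (intro bij_betw_apply[OF p1b]) simp
  then obtain j where "j \<in> {s..<s+t} - C" "p1 l = p j" by blast
  then have "tail_norm2 (qap_col A Q p1 l) s \<le> \<delta>" using \<delta> by (simp add: qap_col_def)
  then show ?thesis by simp
next
  case False
  then have "qap_col A Q p1 l = qap_col A Q p l" using p1c by (simp add: qap_col_def)
  then have "tail_norm2 (qap_col A Q p1 l) s \<le> tail_norm2 (qap_col A Q p l) 0"
    using tail_norm2_antimono[of 0 s] by simp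
  also have "\<dots> = colnorm2 A 0 (p l)"
    using tail_norm2_qap_col[OF A Q] pn \<open>l < n\<close> by simp
  also have "\<dots> \<le> \<mu>" using \<mu> False \<open>l < n\<close> by simp
  finally show ?thesis by simp
qed

text \<open>The bound by \<open>\<mu>\<close> on the untracked columns is only maintained while \<open>s < k\<close>: a cycle that
  stops skips Expand and leaves \<open>\<mu>\<close> stale. Nothing requires \<open>\<Pi>\<close> to be a permutation; only
  that it maps positions to columns is used.\<close>
definition cceqr_inv :: "complex mat \<Rightarrow> nat \<Rightarrow> cc_state \<Rightarrow> bool" where
  "cceqr_inv A k st \<longleftrightarrow> (case st of (p, Q, s, t, \<mu>, _) \<Rightarrow>
     Q \<in> carrier_mat (dim_row A) (dim_row A) \<and> unitary_mat Q \<and> s \<le> dim_row A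
     \<and> s + t \<le> dim_col A \<and> (\<forall>l<dim_col A. p l < dim_col A)
     \<and> gb_pivoted s (dim_col A) (qap_col A Q p)
     \<and> (s < k \<longrightarrow> (\<forall>l. s + t \<le> l \<and> l < dim_col A \<longrightarrow> colnorm2 A 0 (p l) \<le> \<mu>)))"

lemma cceqr_inv_init: "cceqr_inv A k (id, 1\<^sub>m (dim_row A), 0, dim_col A, 0, True)"
  by (simp add: cceqr_inv_def gb_pivoted_def)

lemma cceqr_inv_expand_core:
  assumes A: "A \<in> carrier_mat m n"
    and Q: "Q \<in> carrier_mat m m" "unitary_mat Q" and "s \<le> m" "s + t \<le> n"
    and pn: "\<forall>l<n. p l < n" and piv: "gb_pivoted s n (qap_col A Q p)"
    and U: "U \<subseteq> {s+t..<n}"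
    and p'a: "\<forall>l. l < s + t \<or> n \<le> l \<longrightarrow> p' l = p l"
    and p'b: "bij_betw p' {s+t..<s+t+card U} (p ` U)"
    and p'c: "bij_betw p' {s+t+card U..<n} (p ` ({s+t..<n} - U))"
  defines "\<mu>' \<equiv> (if {s+t..<n} - U = {} then 0 else Max ((\<lambda>j. colnorm2 A 0 (p j)) ` ({s+t..<n} - U)))"
  shows "cceqr_inv A k (p', Q, s, t + card U, \<mu>', False)"
proof -
  have "card U \<le> n - (s + t)" using card_mono[OF _ U] by simp
  have source: "\<exists>j. s + t \<le> j \<and> j < n \<and> p' l = p j" if "s + t \<le> l" "l < n" for l
  proof (cases "l < s + t + card U")
    case True
    then have "p' l \<in> p ` U" using that by (intro bij_betw_apply[OF p'b]) simp
    then obtain j where "j \<in> U" "p' l = p j" by blast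
    with U show ?thesis by (intro exI[of _ j]) auto
  next
    case False
    then have "p' l \<in> p ` ({s+t..<n} - U)" using that by (intro bij_betw_apply[OF p'c]) simp
    then obtain j where "j \<in> {s+t..<n} - U" "p' l = p j" by blast
    then show ?thesis by (intro exI[of _ j]) auto
  qed
  have "gb_pivoted s n (qap_col A Q p')"
    using p'a source by (intro gb_pivoted_qap_col_shuffle[OF piv, of "s + t"]) auto
  moreover have "p' l < n" if "l < n" for l
    using source[of l] p'a pn that by (cases "l < s + t") auto
  moreover have "colnorm2 A 0 (p' l) \<le> \<mu>'" if "s + t + card U \<le> l" "l < n" for l
  proof -
    have "p' l \<in> p ` ({s+t..<n} - U)" using that by (intro bij_betw_apply[OF p'c]) simp
    then obtain j where "j \<in> {s+t..<n} - U" "p' l = p j" by blast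
    then show ?thesis by (auto simp: \<mu>'_def intro: Max_ge)
  qed
  ultimately show ?thesis
    using A Q \<open>s \<le> m\<close> \<open>s + t \<le> n\<close> \<open>card U \<le> n - (s + t)\<close> by (auto simp: cceqr_inv_def)
qed

text \<open>The threshold \<open>M\<close> only decides which columns become tracked; any choice preserves the
  invariant.\<close>
lemma cceqr_inv_expand:
  assumes A: "A \<in> carrier_mat m n"
    and Q: "Q \<in> carrier_mat m m" "unitary_mat Q" and "s \<le> m" "s + t \<le> n"
    and pn: "\<forall>l<n. p l < n" and piv: "gb_pivoted s n (qap_col A Q p)"
    and expand: "let M = threshold; Utr = {s+t..<n}; nrm = (\<lambda>j. colnorm2 A 0 (p j));
        U0 = {j\<in>Utr. M \<le> nrm j};
        U = (if U0 = {} \<and> Utr \<noteq> {} then {j\<in>Utr. 0.9 * Max (nrm ` Utr) \<le> nrm j} else U0)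
      in \<exists>p'. (\<forall>l. l < s + t \<or> n \<le> l \<longrightarrow> p' l = p l)
           \<and> bij_betw p' {s+t..<s+t+card U} (p ` U)
           \<and> bij_betw p' {s+t+card U..<n} (p ` (Utr - U))
           \<and> st' = (p', Q, s, t + card U,
                    (if Utr - U = {} then 0 else Max (nrm ` (Utr - U))), False)"
  shows "cceqr_inv A k st'"
proof -
  define Utr where "Utr = {s+t..<n}"
  define nrm where "nrm = (\<lambda>j. colnorm2 A 0 (p j))"
  define U where "U = (if {j\<in>Utr. threshold \<le> nrm j} = {} \<and> Utr \<noteq> {}
    then {j\<in>Utr. 0.9 * Max (nrm ` Utr) \<le> nrm j} else {j\<in>Utr. threshold \<le> nrm j})"
  obtain p' where p': "\<forall>l. l < s + t \<or> n \<le> l \<longrightarrow> p' l = p l"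
    "bij_betw p' {s+t..<s+t+card U} (p ` U)" "bij_betw p' {s+t+card U..<n} (p ` (Utr - U))"
    and st': "st' = (p', Q, s, t + card U, (if Utr - U = {} then 0 else Max (nrm ` (Utr - U))), False)"
    using expand unfolding Let_def U_def Utr_def nrm_def by blast
  have "U \<subseteq> {s+t..<n}" by (auto simp: U_def Utr_def)
  from cceqr_inv_expand_core[OF A Q \<open>s \<le> m\<close> \<open>s + t \<le> n\<close> pn piv this p'[unfolded Utr_def]]
  show ?thesis unfolding st' Utr_def nrm_def .
qed

lemma cceqr_collect_commit:
  assumes A: "A \<in> carrier_mat m n" and inv: "cceqr_inv A k (p, Q, s, t, \<mu>, fc)" and "s < k"
    and C: "C \<subseteq> {s..<s+t}" "card C = b"
    and \<delta>: "\<delta> = (if {s..<s+t} - C = {} then 0 else Max (cc_gamma A p Q s t ` ({s..<s+t} - C)))"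
    and gb: "gb_steps (cand_mat A p Q s C) (min (m - s) b) \<sigma> Hs R"
    and p1a: "\<forall>l<b. p1 (s + l) = p (cand_enum C (\<sigma> l))"
    and p1b: "bij_betw p1 {s+b..<s+t} (p ` ({s..<s+t} - C))"
    and p1c: "\<forall>l. l < s \<or> s + t \<le> l \<longrightarrow> p1 l = p l"
    and c: "c \<in> {i\<in>{1..min (m - s) b}. max \<delta> \<mu> \<le> (cmod (R $$ (i - 1, i - 1)))\<^sup>2}"
  defines "Q' \<equiv> Q * block_diag_one s (m - s) (foldr (*) (take c Hs) (1\<^sub>m (m - s)))"
  shows "Q' \<in> carrier_mat m m \<and> unitary_mat Q' \<and> gb_pivoted (s + c) n (qap_col A Q' p1)
    \<and> (\<forall>l<n. p1 l < n) \<and> s + c \<le> m \<and> c \<le> b"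
proof -
  have Q: "Q \<in> carrier_mat m m" "unitary_mat Q" and "s \<le> m" "s + t \<le> n"
    and pn: "\<forall>l<n. p l < n" and piv: "gb_pivoted s n (qap_col A Q p)"
    and \<mu>: "\<forall>l. s + t \<le> l \<and> l < n \<longrightarrow> colnorm2 A 0 (p l) \<le> \<mu>"
    using inv \<open>s < k\<close> A by (auto simp: cceqr_inv_def)
  have C_finite: "finite C" using C(1) finite_subset by blast
  have B: "cand_mat A p Q s C \<in> carrier_mat (m - s) b"
    using A C(2) by (simp add: cand_mat_def Let_def)
  have \<sigma>: "\<forall>l<b. \<sigma> l < b" using gb_steps_invariant[OF gb] B by simp
  have source: "\<exists>j. s \<le> j \<and> j < n \<and> p1 l = p j" if "s \<le> l" "l < n" for l
    using cceqr_collect_source[OF C \<sigma> p1a p1b p1c that \<open>s + t \<le> n\<close>] .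
  have "\<forall>l<n. p1 l < n"
    using source p1c pn by (metis not_le)
  moreover have "gb_pivoted s n (qap_col A Q p1)"
    using p1c source by (intro gb_pivoted_qap_col_shuffle[OF piv order_refl]) auto
  moreover have "col (cand_mat A p Q s C) (\<sigma> l) = vec_last (qap_col A Q p1 (s + l)) (m - s)"
    if "l < b" for l
  proof -
    have "C \<subseteq> {..<n}" "\<forall>j\<in>C. p j < n" using C(1) \<open>s + t \<le> n\<close> pn by auto
    then show ?thesis
      using col_cand_mat[OF A Q(1) \<open>s \<le> m\<close> C_finite, of p "\<sigma> l"] C(2) \<sigma> p1a that
      by (simp add: qap_col_def)
  qed
  moreover have "tail_norm2 (qap_col A Q p1 l) s \<le> (cmod (R $$ (c - 1, c - 1)))\<^sup>2"
    if "s + b \<le> l" "l < n" for l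
  proof -
    have "\<forall>j\<in>{s..<s+t} - C. tail_norm2 (qap_col A Q p j) s \<le> \<delta>"
      using \<delta> pn \<open>s + t \<le> n\<close> by (auto simp: cc_gamma_tracked[OF A Q(1)] intro!: Max_ge)
    then have "tail_norm2 (qap_col A Q p1 l) s \<le> max \<delta> \<mu>"
      using cceqr_collect_rest[OF A Q pn _ \<mu> p1b p1c that] by blast
    moreover have "max \<delta> \<mu> \<le> (cmod (R $$ (c - 1, c - 1)))\<^sup>2" using c by simp
    ultimately show ?thesis by (rule order_trans)
  qed
  ultimately show ?thesis
    using cceqr_commit[OF A Q \<open>s \<le> m\<close> _ gb B, of p1 c] c \<open>s \<le> m\<close> by (auto simp: Q'_def)
qed

lemma cceqr_inv_cycle:
  assumes A: "A \<in> carrier_mat m n" and inv: "cceqr_inv A k (p, Q, s, t, \<mu>, fc)" and "s < k"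
    and cyc: "cceqr_cycle A k \<rho> (p, Q, s, t, \<mu>, fc) st'"
  shows "cceqr_inv A k st'"
proof -
  have dims: "dim_row A = m" "dim_col A = n" using A by auto
  define T where "T = {s..<s+t}"
  define b where "b = nat (1 + \<lfloor>\<rho> * (real t - 1)\<rfloor>)"
  obtain C \<delta> t1 \<sigma> Hs R p1 c Q1 s1 t2 where
    C: "C \<subseteq> T" "card C = b"
    and \<delta>: "\<delta> = (if T - C = {} then 0 else Max (cc_gamma A p Q s t ` (T - C)))"
    and t1: "t1 = (if fc then b else t)"
    and gb: "gb_steps (cand_mat A p Q s C) (min (m - s) b) \<sigma> Hs R"
    and p1a: "\<forall>l<b. p1 (s + l) = p (cand_enum C (\<sigma> l))"
    and p1b: "bij_betw p1 {s+b..<s+t} (p ` (T - C))"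
    and p1c: "\<forall>l. l < s \<or> s + t \<le> l \<longrightarrow> p1 l = p l"
    and c_ne: "{i\<in>{1..min (m - s) b}. max \<delta> \<mu> \<le> (cmod (R $$ (i-1, i-1)))\<^sup>2} \<noteq> {}"
    and c: "c = Max {i\<in>{1..min (m - s) b}. max \<delta> \<mu> \<le> (cmod (R $$ (i-1, i-1)))\<^sup>2}"
    and Q1: "Q1 = Q * block_diag_one s (m - s) (foldr (*) (take c Hs) (1\<^sub>m (m - s)))"
    and s1: "s1 = s + c" and t2: "t2 = t1 - c"
    and step: "if k \<le> s1 then st' = (p1, Q1, s1, t2, \<mu>, False)
      else (let M = (if t2 = 0 then 0 else Max (cc_gamma A p1 Q1 s1 t2 ` {s1..<s1+t2}));
              Utr = {s1+t2..<n}; nrm = (\<lambda>j. colnorm2 A 0 (p1 j));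
              U0 = {j\<in>Utr. M \<le> nrm j};
              U = (if U0 = {} \<and> Utr \<noteq> {} then {j\<in>Utr. 0.9 * Max (nrm ` Utr) \<le> nrm j} else U0)
          in \<exists>p'. (\<forall>l. l < s1 + t2 \<or> n \<le> l \<longrightarrow> p' l = p1 l)
               \<and> bij_betw p' {s1+t2..<s1+t2+card U} (p1 ` U)
               \<and> bij_betw p' {s1+t2+card U..<n} (p1 ` (Utr - U))
               \<and> st' = (p', Q1, s1, t2 + card U,
                        (if Utr - U = {} then 0 else Max (nrm ` (Utr - U))), False))"
    using cyc unfolding cceqr_cycle_def Let_def dims T_def b_def prod.case
    by (elim exE conjE) (rule that[unfolded T_def b_def Let_def], assumption+)
  have "c \<in> {i\<in>{1..min (m - s) b}. max \<delta> \<mu> \<le> (cmod (R $$ (i-1, i-1)))\<^sup>2}"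
    unfolding c by (rule Max_in[OF _ c_ne]) simp
  then have "Q1 \<in> carrier_mat m m \<and> unitary_mat Q1 \<and> gb_pivoted s1 n (qap_col A Q1 p1)
      \<and> (\<forall>l<n. p1 l < n) \<and> s1 \<le> m \<and> c \<le> b"
    unfolding Q1 s1
    by (rule cceqr_collect_commit[OF A inv \<open>s < k\<close> C[unfolded T_def] \<delta>[unfolded T_def] gb p1a
        p1b[unfolded T_def] p1c])
  then have Q1: "Q1 \<in> carrier_mat m m" "unitary_mat Q1" and piv: "gb_pivoted s1 n (qap_col A Q1 p1)"
    and p1n: "\<forall>l<n. p1 l < n" and "s1 \<le> m" "c \<le> b"
    by blast+
  have "b \<le> t" using card_mono[of T C] C by (simp add: T_def)
  have "s1 + t2 \<le> n"
    using inv \<open>b \<le> t\<close> \<open>c \<le> b\<close> by (auto simp: cceqr_inv_def dims s1 t2 t1)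
  show ?thesis
  proof (cases "k \<le> s1")
    case True
    then show ?thesis
      using step Q1 piv p1n \<open>s1 \<le> m\<close> \<open>s1 + t2 \<le> n\<close> by (simp add: cceqr_inv_def dims)
  next
    case False
    show ?thesis
      by (rule cceqr_inv_expand[OF A Q1 \<open>s1 \<le> m\<close> \<open>s1 + t2 \<le> n\<close> p1n piv
            step[unfolded if_not_P[OF False]]])
  qed
qed

lemma cceqr_reach_inv:
  assumes A: "A \<in> carrier_mat m n" and "cceqr_reach A k \<rho> st"
  shows "cceqr_inv A k st"
  using assms(2)
proof (induction rule: cceqr_reach.induct)
  case cc_init
  then show ?case by (rule cceqr_inv_init)
next
  case (cc_step p Q s t \<mu> fc st')
  then show ?case using cceqr_inv_cycle[OF A] by blast
qed

theorem theorem3p2: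
  fixes A :: "complex mat" and m n k :: nat and \<rho> :: real and P :: "complex mat"
  assumes "A \<in> carrier_mat m n"
    and "1 \<le> k" and "k \<le> min m n"
    and "0 < \<rho>" and "\<rho> < 1"
    and "cceqr_output A k \<rho> P"
  shows "\<exists>Q. Q \<in> carrier_mat m m \<and> unitary_mat Q \<and> GB_form k (mat_adj Q * A * P)"
proof -
  note A = assms(1)
  obtain p Q s t \<mu> fc where reach: "cceqr_reach A k \<rho> (p, Q, s, t, \<mu>, fc)" and "k \<le> s"
    and P: "P = perm_mat n p"
    using assms(6) A by (auto simp: cceqr_output_def)
  then have Q: "Q \<in> carrier_mat m m" "unitary_mat Q" and pn: "\<forall>l<n. p l < n"
    and piv: "gb_pivoted s n (qap_col A Q p)"
    using cceqr_reach_inv[OF A reach] A by (auto simp: cceqr_inv_def)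
  have "gb_pivoted k n (col (mat_adj Q * A * P))"
    using gb_pivoted_antimono[OF \<open>k \<le> s\<close> piv] col_qap[OF A Q(1)] pn
    by (subst gb_pivoted_cong[of n _ "qap_col A Q p"]) (simp_all add: P)
  moreover have "mat_adj Q * A * P \<in> carrier_mat m n"
    unfolding P using mult_carrier_mat[OF mult_carrier_mat[OF mat_adj_carrier[OF Q(1)] A] perm_mat_carrier] .
  ultimately show ?thesis
    using Q GB_form_if_gb_pivoted assms(3) by blast
qed

end
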